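(* Fix $w\in S_n$ and consider $H^*(X_w)$ as a $\mathbb{C}[S_n]$-module with the $S_n$-action inherited from $H^*_T(X_w)$. Then $H^*(X_w)$ is isomorphic to $\bigoplus_{v\in S_n,\ v\le w}1^{\ell(v)}$ as a graded $\mathbb{C}[S_n]$-module.
   Context: Let $G=GL_n(\mathbb{C})$, $B$ the invertible upper-triangular matrices, and $T$ the diagonal torus. Permutations are identified with permutation matrices via $we_i=e_{w(i)}$, and $s_{jk}$ is the transposition of $j,k$. $X_w=\overline{BwB/B}$, and the Bruhat order is $v\le w$ iff $[v]\in X_w$. $\ell(v)$ is the number of pairs $i<j$ with $v^{-1}(i)>v^{-1}(j)$. In GKM form, $H^*_T(X_w)$ is the ring of tuples $(p_u)_{u\le w}$ of polynomials in $\mathbb{C}[t_1,\ldots,t_n]$ such that $p_u-p_{s_{jk}u}\in\langle t_j-t_k\rangle$ whenever $j<k$ and $u,s_{jk}u\le w$; $H^*_T(G/B)$ is the case of the longest permutation. $S_n$ acts on polynomials by $(u\cdot f)(t_1,\ldots,t_n)=f(t_{u(1)},\ldots,t_{u(n)})$, on $H^*_T(G/B)$ by $(u\cdot p)_v=u\cdot p_{u^{-1}v}$, and on $H^*_T(X_w)$ by $s\cdot\iota(p)=\iota(s\cdot p)$, where $\iota((p_u)_{u\in S_n})=(p_u)_{u\le w}$. The ordinary cohomology is $H^*(X_w)\cong H^*_T(X_w)/\langle t_1,\ldots,t_n\rangle H^*_T(X_w)$, with the $S_n$-action induced from that on $H^*_T(X_w)$. $1^d$ denotes the trivial representation in degree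 $d$. *)

theory Defs
  imports Complex_Main "HOL-Library.Poly_Mapping" "HOL-Combinatorics.Combinatorics"
begin

text \<open>Multivariate polynomials: finitely supported maps from monomials (exponent
vectors nat =>0 nat) to complex coefficients. We only use polynomials whose variables lie in {1..n}.\<close>

type_synonym mpoly = "(nat \<Rightarrow>\<^sub>0 nat) \<Rightarrow>\<^sub>0 complex"

definition var :: "nat \<Rightarrow> mpoly" where
  "var i = Poly_Mapping.single (Poly_Mapping.single i 1) 1"

definition polys :: "nat \<Rightarrow> mpoly set" where
  "polys n = {p. \<forall>m \<in> Poly_Mapping.keys p. Poly_Mapping.keys m \<subseteq> {1..n}}"

definition mono_deg :: "(nat \<Rightarrow>\<^sub>0 nat) \<Rightarrow> nat" where
  "mono_deg m = (\<Sum>i \<in> Poly_Mapping.keys m. Poly_Mapping.lookup m i)"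

text \<open>homogeneous of degree d (the zero polynomial is homogeneous of every degree)\<close>
definition homog :: "nat \<Rightarrow> mpoly \<Rightarrow> bool" where
  "homog d p \<longleftrightarrow> (\<forall>m \<in> Poly_Mapping.keys p. mono_deg m = d)"

text \<open>(u . f)(t_1,...,t_n) = f(t_{u(1)},...,t_{u(n)}): the monomial with exponent
vector m is sent to the one with exponent vector m o u^{-1}; hence the coefficient of
the monomial m' in u . f is the coefficient of m' o u in f.\<close>
definition poly_act :: "(nat \<Rightarrow> nat) \<Rightarrow> mpoly \<Rightarrow> mpoly" where
  "poly_act u f = Poly_Mapping.map_key (Poly_Mapping.map_key u) f"

text \<open>S_n = permutations of {1..n} (identity outside), acting on vectors by
w e_i = e_{w(i)}; s_{jk} is the transposition of j and k.\<close>

definition Sn :: "nat \<Rightarrow> (nat \<Rightarrow> nat) set" where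
  "Sn n = {u. u permutes {1..n}}"

definition len :: "nat \<Rightarrow> (nat \<Rightarrow> nat) \<Rightarrow> nat" where
  "len n v = card {(i, j). 1 \<le> i \<and> i < j \<and> j \<le> n \<and> inv v i > inv v j}"

definition longest :: "nat \<Rightarrow> nat \<Rightarrow> nat" where
  "longest n = (\<lambda>i. if 1 \<le> i \<and> i \<le> n then n + 1 - i else i)"

definition bruhat_step :: "nat \<Rightarrow> (nat \<Rightarrow> nat) \<Rightarrow> (nat \<Rightarrow> nat) \<Rightarrow> bool" where
  "bruhat_step n u u' \<longleftrightarrow> u \<in> Sn n \<and>
     (\<exists>j k. 1 \<le> j \<and> j < k \<and> k \<le> n \<and> u' = Transposition.transpose j k \<circ> u \<and> len n u < len n u')"

definition bruhat_le :: "nat \<Rightarrow> (nat \<Rightarrow> nat) \<Rightarrow> (nat \<Rightarrow> nat) \<Rightarrow> bool" where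
  "bruhat_le n v w \<longleftrightarrow> v \<in> Sn n \<and> w \<in> Sn n \<and> (bruhat_step n)\<^sup>*\<^sup>* v w"

text \<open>H_T(X_w): tuples (p_u)_{u <= w}, represented as functions on permutations that
vanish outside the Bruhat interval [e,w].\<close>
definition GKM :: "nat \<Rightarrow> (nat \<Rightarrow> nat) \<Rightarrow> ((nat \<Rightarrow> nat) \<Rightarrow> mpoly) set" where
  "GKM n w = {p. (\<forall>u. p u \<in> polys n) \<and> (\<forall>u. \<not> bruhat_le n u w \<longrightarrow> p u = 0) \<and>
     (\<forall>j k u. 1 \<le> j \<and> j < k \<and> k \<le> n \<and> bruhat_le n u w \<and>
        bruhat_le n (Transposition.transpose j k \<circ> u) w \<longrightarrow>
        (\<exists>q \<in> polys n. p u - p (Transposition.transpose j k \<circ> u) = (var j - var k) * q))}"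

definition GKM_flag :: "nat \<Rightarrow> ((nat \<Rightarrow> nat) \<Rightarrow> mpoly) set" where
  "GKM_flag n = GKM n (longest n)"

definition restr :: "nat \<Rightarrow> (nat \<Rightarrow> nat) \<Rightarrow> ((nat \<Rightarrow> nat) \<Rightarrow> mpoly) \<Rightarrow> ((nat \<Rightarrow> nat) \<Rightarrow> mpoly)" where
  "restr n w p = (\<lambda>u. if bruhat_le n u w then p u else 0)"

definition flag_act :: "nat \<Rightarrow> (nat \<Rightarrow> nat) \<Rightarrow> ((nat \<Rightarrow> nat) \<Rightarrow> mpoly) \<Rightarrow> ((nat \<Rightarrow> nat) \<Rightarrow> mpoly)" where
  "flag_act n u p = (\<lambda>v. if v \<in> Sn n then poly_act u (p (inv u \<circ> v)) else 0)"

definition GKM_deg :: "nat \<Rightarrow> (nat \<Rightarrow> nat) \<Rightarrow> nat \<Rightarrow> ((nat \<Rightarrow> nat) \<Rightarrow> mpoly) set" where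
  "GKM_deg n w d = {p \<in> GKM n w. \<forall>u. homog d (p u)}"

definition tGKM :: "nat \<Rightarrow> (nat \<Rightarrow> nat) \<Rightarrow> ((nat \<Rightarrow> nat) \<Rightarrow> mpoly) set" where
  "tGKM n w = {x. \<exists>y. (\<forall>i. y i \<in> GKM n w) \<and> x = (\<lambda>u. \<Sum>i = 1..n. var i * y i u)}"

end

(* The classes xi_v(u) = prod of (t_{u(a)} - t_{v(b)}) over the inversions (a, b) of v, restricted
   to the Bruhat interval below w, form a basis of H_T(X_w) over the polynomial ring: xi_v is
   homogeneous of degree l(v), vanishes at every u lexicographically smaller than v, and xi_v(v) is
   a product of pairwise coprime roots t_a - t_b, each of which divides p(v) by the GKM conditions
   whenever the class p vanishes lexicographically below v.  Taking constant terms of the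
   coefficients in this basis therefore identifies the degree-d classes modulo <t_1, ..., t_n> with
   the functions on {v <= w, l(v) = d}.  A permutation s changes xi_v only by replacing t_{v(b)} with
   t_{s(v(b))}, and permutes the variables of the coefficients; both changes lie in
   <t_1, ..., t_n> H_T(X_w), so S_n acts trivially on H^*(X_w). *)

theory Submission
  imports Defs "HOL-Library.Fun_Lexorder"
begin

abbreviation lookup :: "('a \<Rightarrow>\<^sub>0 'b::zero) \<Rightarrow> 'a \<Rightarrow> 'b" where
  "lookup \<equiv> Poly_Mapping.lookup"
abbreviation keys :: "('a \<Rightarrow>\<^sub>0 'b::zero) \<Rightarrow> 'a set" where
  "keys \<equiv> Poly_Mapping.keys"
abbreviation single :: "'a \<Rightarrow> 'b \<Rightarrow> ('a \<Rightarrow>\<^sub>0 'b::zero)" where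
  "single \<equiv> Poly_Mapping.single"

section \<open>Polynomials\<close>

lemma poly_mapping_sum_single: "(p :: 'a \<Rightarrow>\<^sub>0 'b::comm_monoid_add) = (\<Sum>m\<in>keys p. single m (lookup p m))"
  by (rule poly_mapping_eqI)
     (auto simp: lookup_sum lookup_single when_def in_keys_iff sum.delta[OF finite_keys])

lemma additive_sum:
  fixes A :: "'a::comm_monoid_add \<Rightarrow> 'b::cancel_comm_monoid_add"
  assumes add: "\<And>x y. A (x + y) = A x + A y"
  shows "A (sum f S) = (\<Sum>s\<in>S. A (f s))"
proof -
  have "A 0 = 0" using add[of 0 0] by (metis add_cancel_right_right add_0)
  then show ?thesis by (induction S rule: infinite_finite_induct) (auto simp: add)
qed

lemma additive_mult:
  fixes A :: "('a::monoid_add \<Rightarrow>\<^sub>0 'b::semiring_0) \<Rightarrow> 'c::semiring_0_cancel"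
  assumes add: "\<And>x y. A (x + y) = A x + A y"
    and single: "\<And>m c m' c'. A (single m c * single m' c') = A (single m c) * A (single m' c')"
  shows "A (p * q) = A p * A q"
proof -
  let ?p = "\<lambda>m. single m (lookup p m)" and ?q = "\<lambda>m. single m (lookup q m)"
  have p: "A p = (\<Sum>m\<in>keys p. A (?p m))" and q: "A q = (\<Sum>m\<in>keys q. A (?q m))"
    by (subst poly_mapping_sum_single, rule additive_sum[OF add])+
  have "A (p * q) = A ((\<Sum>m\<in>keys p. ?p m) * (\<Sum>m'\<in>keys q. ?q m'))"
    by (simp flip: poly_mapping_sum_single)
  also have "\<dots> = (\<Sum>m\<in>keys p. \<Sum>m'\<in>keys q. A (?p m) * A (?q m'))"
    by (simp add: sum_product additive_sum[OF add] single)
  also have "\<dots> = A p * A q"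
    by (simp add: p q sum_product)
  finally show ?thesis .
qed

lemma lookup_single_0_mult: "lookup (single 0 c * q) m = c * lookup q m"
  by (simp flip: mult_map_scale_conv_mult add: Poly_Mapping.map.rep_eq when_def)

lemma lookup_var_mult_0: "lookup (var i * q) 0 = 0"
proof (rule ccontr)
  assume "lookup (var i * q) 0 \<noteq> 0"
  then have "0 \<in> keys (var i * q)" by (simp add: in_keys_iff)
  then have "0 \<in> {a + b | a b. a \<in> keys (var i) \<and> b \<in> keys q}"
    using keys_mult[of "var i" q] by blast
  then obtain b where "single i (Suc 0) + b = 0" by (auto simp: var_def)
  then have "lookup (single i (Suc 0) + b) i = 0" by simp
  then show False by (simp add: lookup_add)
qed

lemma lookup_var_0: "lookup (var i) 0 = 0"
  using lookup_var_mult_0[of i 1] by simp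

lemma var_inj: "var i = var j \<longleftrightarrow> i = j"
proof
  assume ij: "var i = var j"
  have "lookup (var i) (single i 1) = 1" by (simp add: var_def)
  then have "lookup (var j) (single i 1) = 1" by (simp only: ij)
  then have "single j (1::nat) = single i 1" by (simp add: var_def lookup_single when_def split: if_splits)
  then show "i = j" by (metis lookup_single_eq lookup_single_not_eq one_neq_zero)
qed simp

lemma var_power: "var i ^ e = single (single i e) 1"
  by (induction e) (simp_all add: var_def mult_single flip: single_add)

definition lin_ext :: "((nat \<Rightarrow>\<^sub>0 nat) \<Rightarrow> mpoly) \<Rightarrow> mpoly \<Rightarrow> mpoly" where
  "lin_ext F p = (\<Sum>m\<in>keys p. single 0 (lookup p m) * F m)"

lemma lin_ext_single: "lin_ext F (single m c) = single 0 c * F m"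
  by (simp add: lin_ext_def)

lemma lin_ext_add: "lin_ext F (p + q) = lin_ext F p + lin_ext F q"
  unfolding lin_ext_def
  by (rule setsum_keys_plus_distrib) (simp_all add: single_add distrib_right)

lemma lin_ext_diff: "lin_ext F (p - q) = lin_ext F p - lin_ext F q"
  by (metis add_diff_cancel_left' diff_add_cancel lin_ext_add)

lemma lin_ext_mult:
  assumes "\<And>a b. F (a + b) = F a * F b"
  shows "lin_ext F (p * q) = lin_ext F p * lin_ext F q"
proof (rule additive_mult[OF lin_ext_add])
  fix m c m' c'
  have "lin_ext F (single m c * single m' c') = single 0 (c * c') * F (m + m')"
    by (simp add: mult_single lin_ext_single)
  also have "single 0 (c * c') = single 0 c * (single 0 c' :: mpoly)"
    by (simp add: mult_single)
  finally show "lin_ext F (single m c * single m' c') = lin_ext F (single m c) * lin_ext F (single m' c')"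
    by (simp add: lin_ext_single assms mult_ac)
qed

lemma lin_ext_one: "lin_ext F 1 = F 0"
  using lin_ext_single[of F 0 1] by simp

lemma lin_ext_monomial: "lin_ext (\<lambda>m. single m 1) p = p"
proof -
  have "lin_ext (\<lambda>m. single m 1) p = (\<Sum>m\<in>keys p. single m (lookup p m))"
    by (simp add: lin_ext_def mult_single)
  then show ?thesis by (simp flip: poly_mapping_sum_single)
qed

lemma polysI: "(\<And>m. m \<in> keys p \<Longrightarrow> keys m \<subseteq> {1..n}) \<Longrightarrow> p \<in> polys n"
  by (auto simp: polys_def)

lemma polysD: "p \<in> polys n \<Longrightarrow> m \<in> keys p \<Longrightarrow> keys m \<subseteq> {1..n}"
  by (auto simp: polys_def)

lemma keys_add_nat: "keys ((a :: nat \<Rightarrow>\<^sub>0 nat) + b) = keys a \<union> keys b"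
  by (auto simp: in_keys_iff lookup_add)

lemma polys_0 [simp]: "0 \<in> polys n"
  and polys_1 [simp]: "1 \<in> polys n"
  and polys_single_0 [simp]: "single 0 c \<in> polys n"
  by (simp_all add: polys_def)

lemma polys_var: "i \<in> {1..n} \<Longrightarrow> var i \<in> polys n"
  by (simp add: polys_def var_def)

lemma polys_add [simp]: "p \<in> polys n \<Longrightarrow> q \<in> polys n \<Longrightarrow> p + q \<in> polys n"
  using keys_add[of p q] by (auto simp: polys_def)

lemma polys_uminus [simp]: "p \<in> polys n \<Longrightarrow> - p \<in> polys n"
  by (simp add: polys_def)

lemma polys_diff [simp]: "p \<in> polys n \<Longrightarrow> q \<in> polys n \<Longrightarrow> p - q \<in> polys n"
  using polys_add[of p n "- q"] by simp

lemma polys_mult [simp]: "p \<in> polys n \<Longrightarrow> q \<in> polys n \<Longrightarrow> p * q \<in> polys n"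
proof (rule polysI)
  fix m assume p: "p \<in> polys n" and q: "q \<in> polys n" and "m \<in> keys (p * q)"
  then obtain a b where "m = a + b" "a \<in> keys p" "b \<in> keys q" using keys_mult by blast
  then show "keys m \<subseteq> {1..n}" using polysD[OF p] polysD[OF q] by (auto simp: keys_add_nat)
qed

lemma polys_sum: "(\<And>i. i \<in> S \<Longrightarrow> f i \<in> polys n) \<Longrightarrow> sum f S \<in> polys n"
  by (induction S rule: infinite_finite_induct) auto

definition restrict_vars :: "nat \<Rightarrow> mpoly \<Rightarrow> mpoly" where
  "restrict_vars n = lin_ext (\<lambda>m. if keys m \<subseteq> {1..n} then single m 1 else 0)"

lemma restrict_vars_mult: "restrict_vars n (p * q) = restrict_vars n p * restrict_vars n q"
  unfolding restrict_vars_def by (rule lin_ext_mult) (simp add: keys_add_nat mult_single)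

lemma restrict_vars_polys: "restrict_vars n p \<in> polys n"
  unfolding restrict_vars_def lin_ext_def by (rule polys_sum) (simp add: polys_def mult_single)

lemma restrict_vars_id: "p \<in> polys n \<Longrightarrow> restrict_vars n p = p"
  unfolding restrict_vars_def
  by (subst (2) lin_ext_monomial[symmetric]) (auto simp: lin_ext_def dest: polysD intro!: sum.cong)

lemma polys_dvd_quotient:
  assumes "q dvd p" and "p \<in> polys n" and "q \<in> polys n"
  obtains r where "r \<in> polys n" and "p = q * r"
proof -
  from \<open>q dvd p\<close> obtain r where "p = q * r" by blast
  then have "restrict_vars n p = restrict_vars n q * restrict_vars n r"
    by (simp add: restrict_vars_mult)
  then have "p = q * restrict_vars n r"
    using assms by (simp add: restrict_vars_id)
  with restrict_vars_polys show ?thesis by (rule that)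
qed

lemma var_ideal_decomp:
  assumes "p \<in> polys n" and "lookup p 0 = 0"
  obtains h where "\<And>i. h i \<in> polys n" and "p = (\<Sum>i=1..n. var i * h i)"
proof -
  define I where "I = {p. \<exists>h. (\<forall>i. h i \<in> polys n) \<and> p = (\<Sum>i=1..n. var i * h i)}"
  have I_add: "p + q \<in> I" if "p \<in> I" "q \<in> I" for p q
  proof -
    from that obtain h h' where "\<forall>i. h i \<in> polys n" "p = (\<Sum>i=1..n. var i * h i)"
      "\<forall>i. h' i \<in> polys n" "q = (\<Sum>i=1..n. var i * h' i)" by (auto simp: I_def)
    then show ?thesis unfolding I_def
      by (intro CollectI exI[of _ "\<lambda>i. h i + h' i"]) (simp add: distrib_left sum.distrib)
  qed
  have I_single: "single m c \<in> I" if "m \<in> keys p" for m c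
  proof -
    have "m \<noteq> 0" using that assms(2) by (auto simp: in_keys_iff)
    then obtain i where i: "i \<in> keys m" by fastforce
    then have "i \<in> {1..n}" using polysD[OF assms(1) that] by blast
    define m' where "m' = m - single i 1"
    have m: "m = single i 1 + m'"
      using i by (intro poly_mapping_eqI) (auto simp: m'_def lookup_add lookup_minus lookup_single when_def in_keys_iff)
    have "keys m' \<subseteq> keys m"
      by (auto simp: m'_def in_keys_iff lookup_minus)
    then have m'_polys: "single m' c \<in> polys n" using polysD[OF assms(1) that] by (auto simp: polys_def)
    have "(\<Sum>j=1..n. var j * (if j = i then single m' c else 0)) = var i * single m' c"
      using \<open>i \<in> {1..n}\<close> by (simp add: if_distrib[of "(*) _"] cong: if_cong)
    also have "\<dots> = single m c"
      using m by (simp add: var_def mult_single)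
    finally show ?thesis unfolding I_def using m'_polys
      by (intro CollectI exI[of _ "\<lambda>j. if j = i then single m' c else 0"]) auto
  qed
  have "(\<Sum>m\<in>M. single m (lookup p m)) \<in> I" if "M \<subseteq> keys p" for M
    using finite_subset[OF that finite_keys] that
  proof (induction M rule: finite_induct)
    case empty
    then show ?case unfolding I_def by (intro CollectI exI[of _ "\<lambda>_. 0"]) simp
  qed (simp add: I_add I_single)
  from this[of "keys p"] have "p \<in> I" by (simp flip: poly_mapping_sum_single)
  then show ?thesis using that by (auto simp: I_def)
qed

definition subst_monomial :: "nat \<Rightarrow> nat \<Rightarrow> (nat \<Rightarrow>\<^sub>0 nat) \<Rightarrow> (nat \<Rightarrow>\<^sub>0 nat)" where
  "subst_monomial a b m = Poly_Mapping.update b 0 (Poly_Mapping.update a (lookup m a + lookup m b) m)"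

text \<open>\<open>subst_var a b\<close> substitutes \<open>t\<^sub>a\<close> for \<open>t\<^sub>b\<close>.\<close>
definition subst_var :: "nat \<Rightarrow> nat \<Rightarrow> mpoly \<Rightarrow> mpoly" where
  "subst_var a b = lin_ext (\<lambda>m. single (subst_monomial a b m) 1)"

lemma lookup_subst_monomial:
  "a \<noteq> b \<Longrightarrow> lookup (subst_monomial a b m) k =
     (if k = b then 0 else if k = a then lookup m a + lookup m b else lookup m k)"
  by (auto simp: subst_monomial_def lookup_update)

lemma subst_monomial_add:
  "a \<noteq> b \<Longrightarrow> subst_monomial a b (x + y) = subst_monomial a b x + subst_monomial a b y"
  by (rule poly_mapping_eqI) (simp add: lookup_subst_monomial lookup_add)

lemma subst_var_diff: "subst_var a b (p - q) = subst_var a b p - subst_var a b q"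
  by (simp add: subst_var_def lin_ext_diff)

lemma subst_var_mult: "a \<noteq> b \<Longrightarrow> subst_var a b (p * q) = subst_var a b p * subst_var a b q"
  unfolding subst_var_def
  by (rule lin_ext_mult) (simp add: mult_single subst_monomial_add)

lemma subst_var_var: "a \<noteq> b \<Longrightarrow> subst_var a b (var i) = var (if i = b then a else i)"
proof -
  assume "a \<noteq> b"
  then have "subst_monomial a b (single i 1) = single (if i = b then a else i) 1"
    by (intro poly_mapping_eqI) (auto simp: lookup_subst_monomial lookup_single when_def)
  then show ?thesis by (simp add: subst_var_def var_def lin_ext_single)
qed

lemma subst_var_one: "a \<noteq> b \<Longrightarrow> subst_var a b 1 = 1"
proof -
  assume "a \<noteq> b"
  then have "subst_monomial a b 0 = 0" by (intro poly_mapping_eqI) (simp add: lookup_subst_monomial)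
  then show ?thesis by (simp add: subst_var_def lin_ext_one)
qed

lemma var_diff_dvd_monomial_diff:
  assumes "a \<noteq> b"
  shows "(var a - var b) dvd (single m 1 - single (subst_monomial a b m) 1)"
proof -
  define m0 where "m0 = Poly_Mapping.update b 0 m"
  define e where "e = lookup m b"
  have m: "m = m0 + single b e"
    by (rule poly_mapping_eqI) (auto simp: m0_def e_def lookup_add lookup_update lookup_single when_def)
  have sm: "subst_monomial a b m = m0 + single a e"
    using assms by (intro poly_mapping_eqI)
      (auto simp: m0_def e_def lookup_add lookup_update lookup_single when_def lookup_subst_monomial)
  have "single m 1 - single (subst_monomial a b m) 1 = single m0 1 * (var b ^ e - var a ^ e)"
    by (subst m, subst sm) (simp add: var_power mult_single right_diff_distrib)
  also obtain S where "var b ^ e - var a ^ e = (var b - var a) * S"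
    using power_diff_sumr2 by blast
  also have "single m0 1 * ((var b - var a) * S) = (var a - var b) * - (single m0 1 * S)"
    by (simp add: algebra_simps)
  finally show ?thesis ..
qed

lemma var_diff_dvd_iff_subst_var:
  assumes "a \<noteq> b"
  shows "(var a - var b) dvd p \<longleftrightarrow> subst_var a b p = 0"
proof
  assume "(var a - var b) dvd p"
  then show "subst_var a b p = 0"
    using assms by (auto simp: subst_var_mult subst_var_diff subst_var_var)
next
  assume "subst_var a b p = 0"
  moreover have "p - subst_var a b p =
      (\<Sum>m\<in>keys p. single 0 (lookup p m) * (single m 1 - single (subst_monomial a b m) 1))"
    unfolding subst_var_def lin_ext_def
    by (subst (1) poly_mapping_sum_single)
       (simp add: mult_single right_diff_distrib sum_subtractf)
  moreover have "(var a - var b) dvd \<dots>"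
    by (intro dvd_sum dvd_mult var_diff_dvd_monomial_diff assms)
  ultimately show "(var a - var b) dvd p" by simp
qed

lemma var_diff_prime:
  assumes "a \<noteq> b" and "(var a - var b) dvd (p * q)"
  shows "(var a - var b) dvd p \<or> (var a - var b) dvd q"
  using assms by (simp add: var_diff_dvd_iff_subst_var subst_var_mult)

lemma var_diff_dvd_var_diff:
  assumes "a \<noteq> b" and "c \<noteq> d" and "(var a - var b) dvd (var c - var d)"
  shows "{a, b} = {c, d}"
proof -
  have "var (if c = b then a else c) = var (if d = b then a else d)"
    using assms by (simp add: var_diff_dvd_iff_subst_var subst_var_diff subst_var_var)
  then show ?thesis using assms(1,2) by (auto simp: var_inj split: if_splits)
qed

lemma var_diff_not_dvd_prod:
  assumes "finite I" and "a \<noteq> b"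
    and "\<And>i. i \<in> I \<Longrightarrow> f i \<noteq> g i \<and> {f i, g i} \<noteq> {a, b}"
  shows "\<not> (var a - var b) dvd (\<Prod>i\<in>I. var (f i) - var (g i))"
  using assms
proof (induction I rule: finite_induct)
  case empty
  then show ?case by (simp add: var_diff_dvd_iff_subst_var subst_var_one)
next
  case (insert i I)
  have "\<not> (var a - var b) dvd (var (f i) - var (g i))"
    using insert.prems(2)[of i] var_diff_dvd_var_diff[OF \<open>a \<noteq> b\<close>] by auto
  moreover have "\<not> (var a - var b) dvd (\<Prod>i\<in>I. var (f i) - var (g i))"
    using insert by simp
  ultimately show ?case
    using var_diff_prime[OF \<open>a \<noteq> b\<close>] insert.hyps by auto
qed

lemma prod_var_diff_dvd:
  assumes "finite I"
    and "\<And>i. i \<in> I \<Longrightarrow> f i \<noteq> g i"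
    and "\<And>i i'. i \<in> I \<Longrightarrow> i' \<in> I \<Longrightarrow> i \<noteq> i' \<Longrightarrow> {f i, g i} \<noteq> {f i', g i'}"
    and "\<And>i. i \<in> I \<Longrightarrow> (var (f i) - var (g i)) dvd p"
  shows "(\<Prod>i\<in>I. var (f i) - var (g i)) dvd p"
  using assms
proof (induction I rule: finite_induct)
  case empty
  then show ?case by simp
next
  case (insert i I)
  have "(\<Prod>i\<in>I. var (f i) - var (g i)) dvd p"
    using insert.prems by (intro insert.IH) auto
  then obtain r where r: "p = (\<Prod>i\<in>I. var (f i) - var (g i)) * r" ..
  have "f i \<noteq> g i" using insert.prems(1) by simp
  moreover have "\<not> (var (f i) - var (g i)) dvd (\<Prod>i\<in>I. var (f i) - var (g i))"
    using insert.hyps insert.prems(1,2) by (intro var_diff_not_dvd_prod) auto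
  ultimately have "(var (f i) - var (g i)) dvd r"
    using insert.prems(3)[of i] var_diff_prime[of "f i" "g i"] r by auto
  then obtain r' where "r = (var (f i) - var (g i)) * r'" ..
  then have "p = (\<Prod>i\<in>insert i I. var (f i) - var (g i)) * r'"
    using r insert.hyps by (simp add: mult_ac)
  then show ?case ..
qed

lemma mono_deg_add: "mono_deg (a + b) = mono_deg a + mono_deg b"
proof -
  have sup: "mono_deg m = (\<Sum>i\<in>keys a \<union> keys b. lookup m i)" if "keys m \<subseteq> keys a \<union> keys b" for m
    unfolding mono_deg_def using that by (intro sum.mono_neutral_left) (auto simp: in_keys_iff)
  show ?thesis
    by (simp add: sup keys_add_nat lookup_add sum.distrib)
qed

lemma homog_0 [simp]: "homog d 0"
  by (simp add: homog_def)

lemma homog_add: "homog d p \<Longrightarrow> homog d q \<Longrightarrow> homog d (p + q)"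
  unfolding homog_def using keys_add[of p q] by blast

lemma homog_diff: "homog d p \<Longrightarrow> homog d q \<Longrightarrow> homog d (p - q)"
  using homog_add[of d p "- q"] by (simp add: homog_def)

lemma homog_mult: "homog d p \<Longrightarrow> homog e q \<Longrightarrow> homog (d + e) (p * q)"
  unfolding homog_def using keys_mult[of p q] by (fastforce simp: mono_deg_add)

lemma homog_sum: "(\<And>i. i \<in> S \<Longrightarrow> homog d (f i)) \<Longrightarrow> homog d (sum f S)"
  by (induction S rule: infinite_finite_induct) (auto intro: homog_add)

lemma homog_single_0_mult: "homog d p \<Longrightarrow> homog d (single 0 c * p)"
  using homog_mult[of 0 "single 0 c" d p] by (simp add: homog_def mono_deg_def)

lemma homog_prod_var_diff: "finite I \<Longrightarrow> homog (card I) (\<Prod>i\<in>I. var (f i) - var (g i))"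
proof (induction I rule: finite_induct)
  case empty
  then show ?case by (simp add: homog_def mono_deg_def)
next
  case (insert x F)
  have "homog 1 (var i)" for i by (simp add: homog_def var_def mono_deg_def)
  then have "homog (1 + card F) ((var (f x) - var (g x)) * (\<Prod>i\<in>F. var (f i) - var (g i)))"
    by (intro homog_mult[OF homog_diff insert.IH])
  then show ?case using insert.hyps by simp
qed

definition hom_component :: "nat \<Rightarrow> mpoly \<Rightarrow> mpoly" where
  "hom_component e p = (\<Sum>m\<in>{m\<in>keys p. mono_deg m = e}. single m (lookup p m))"

lemma lookup_hom_component: "lookup (hom_component e p) k = (if mono_deg k = e then lookup p k else 0)"
  by (simp add: hom_component_def lookup_sum lookup_single when_def in_keys_iff
      sum.delta'[of "{m\<in>keys p. mono_deg m = e}"] cong: if_cong)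

lemma hom_component_sum: "hom_component e (sum f S) = (\<Sum>s\<in>S. hom_component e (f s))"
  by (rule additive_sum) (simp add: poly_mapping_eqI lookup_hom_component lookup_add)

lemma hom_component_homog: "homog d p \<Longrightarrow> hom_component e p = (if e = d then p else 0)"
  by (rule poly_mapping_eqI) (auto simp: lookup_hom_component homog_def in_keys_iff)

lemma hom_component_mult_homog:
  assumes "homog l h"
  shows "hom_component e (g * h) = (if l \<le> e then hom_component (e - l) g * h else 0)"
proof -
  let ?g = "\<lambda>m. single m (lookup g m)"
  have "homog (mono_deg m + l) (?g m * h)" for m
    by (rule homog_mult[OF _ assms]) (simp add: homog_def)
  then have "hom_component e (?g m * h) = (if mono_deg m + l = e then ?g m * h else 0)" for m
    by (simp add: hom_component_homog eq_commute)
  then have "hom_component e (g * h) = (\<Sum>m\<in>keys g. if mono_deg m + l = e then ?g m * h else 0)"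
    by (subst poly_mapping_sum_single[of g]) (simp add: sum_distrib_right hom_component_sum)
  also have "\<dots> = (if l \<le> e then \<Sum>m\<in>{m\<in>keys g. mono_deg m = e - l}. ?g m * h else 0)"
    by (auto simp: sum.inter_filter intro!: sum.cong)
  also have "\<dots> = (if l \<le> e then hom_component (e - l) g * h else 0)"
    by (simp add: hom_component_def sum_distrib_right)
  finally show ?thesis .
qed

lemma inj_map_key_bij:
  assumes "bij u" shows "inj (Poly_Mapping.map_key u :: (nat \<Rightarrow>\<^sub>0 nat) \<Rightarrow> _)"
proof (rule injI)
  fix a b :: "nat \<Rightarrow>\<^sub>0 nat"
  assume eq: "Poly_Mapping.map_key u a = Poly_Mapping.map_key u b"
  show "a = b"
  proof (rule poly_mapping_eqI)
    fix k
    obtain j where "k = u j" using assms by (metis bij_pointE)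
    then show "lookup a k = lookup b k"
      using arg_cong[OF eq, of "\<lambda>m. lookup m j"] assms by (simp add: map_key.rep_eq bij_is_inj)
  qed
qed

lemma lookup_poly_act: "bij u \<Longrightarrow> lookup (poly_act u f) m = lookup f (Poly_Mapping.map_key u m)"
  unfolding poly_act_def by (simp add: map_key.rep_eq[OF inj_map_key_bij])

lemma poly_act_single: "bij u \<Longrightarrow> poly_act u (single m c) = single (Poly_Mapping.map_key (inv u) m) c"
proof -
  assume u: "bij u"
  then have inv_u: "inj (inv u)" using bij_imp_bij_inv bij_is_inj by blast
  have "Poly_Mapping.map_key u (Poly_Mapping.map_key (inv u) m) = m"
    using u by (intro poly_mapping_eqI) (simp add: map_key.rep_eq inv_u bij_is_inj bij_inv_eq_iff)
  then show ?thesis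
    using u by (intro poly_mapping_eqI)
      (auto simp: lookup_poly_act lookup_single when_def dest: inj_map_key_bij[THEN injD])
qed

lemma poly_act_add: "bij u \<Longrightarrow> poly_act u (p + q) = poly_act u p + poly_act u q"
  by (rule poly_mapping_eqI) (simp add: lookup_poly_act lookup_add)

lemma poly_act_diff: "bij u \<Longrightarrow> poly_act u (p - q) = poly_act u p - poly_act u q"
  by (rule poly_mapping_eqI) (simp add: lookup_poly_act lookup_minus)

lemma poly_act_sum: "bij u \<Longrightarrow> poly_act u (sum f S) = (\<Sum>s\<in>S. poly_act u (f s))"
  by (rule additive_sum) (rule poly_act_add)

lemma poly_act_mult: "bij u \<Longrightarrow> poly_act u (p * q) = poly_act u p * poly_act u q"
proof (rule additive_mult)
  assume u: "bij u"
  then have "inj (inv u)" using bij_imp_bij_inv bij_is_inj by blast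
  then show "poly_act u (single m c * single m' c') = poly_act u (single m c) * poly_act u (single m' c')"
    for m c m' c'
    using u by (simp add: mult_single poly_act_single map_key_plus)
qed (rule poly_act_add)

lemma poly_act_one: "bij u \<Longrightarrow> poly_act u 1 = 1"
  using poly_act_single[of u 0 1] by (simp add: map_key_zero[OF bij_is_inj[OF bij_imp_bij_inv]])

lemma poly_act_prod: "bij u \<Longrightarrow> poly_act u (prod f I) = (\<Prod>i\<in>I. poly_act u (f i))"
  by (induction I rule: infinite_finite_induct) (auto simp: poly_act_one poly_act_mult)

lemma poly_act_var: "bij u \<Longrightarrow> poly_act u (var i) = var (u i)"
proof -
  assume u: "bij u"
  then have "Poly_Mapping.map_key (inv u) (single i 1) = single (u i) (1::nat)"
    by (intro poly_mapping_eqI)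
      (auto simp: map_key.rep_eq bij_imp_bij_inv bij_is_inj lookup_single when_def bij_inv_eq_iff)
  then show ?thesis by (simp add: var_def poly_act_single[OF u])
qed

lemma lookup_poly_act_0: "bij u \<Longrightarrow> lookup (poly_act u p) 0 = lookup p 0"
  by (simp add: lookup_poly_act bij_is_inj)

lemma poly_act_polys:
  assumes u: "u permutes {1..n}" and p: "p \<in> polys n"
  shows "poly_act u p \<in> polys n"
proof (rule polysI)
  have b: "bij u" using u permutes_bij by blast
  fix m assume "m \<in> keys (poly_act u p)"
  then have "keys (Poly_Mapping.map_key u m) \<subseteq> {1..n}"
    using p polysD by (simp add: in_keys_iff lookup_poly_act[OF b])
  then have "u -` keys m \<subseteq> {1..n}"
    by (simp add: keys_map_key b bij_is_inj)
  show "keys m \<subseteq> {1..n}"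
  proof
    fix i assume "i \<in> keys m"
    then have "inv u i \<in> u -` keys m"
      using permutes_inverses(1)[OF u] by simp
    then have "inv u i \<in> {1..n}"
      using \<open>u -` keys m \<subseteq> {1..n}\<close> by blast
    then show "i \<in> {1..n}"
      using permutes_in_image[OF permutes_inv[OF u]] by blast
  qed
qed

section \<open>Permutations\<close>

definition inversions :: "nat \<Rightarrow> (nat \<Rightarrow> nat) \<Rightarrow> (nat \<times> nat) set" where
  "inversions n v = {(a, b). 1 \<le> a \<and> a < b \<and> b \<le> n \<and> v b < v a}"

lemma finite_inversions: "finite (inversions n v)"
  by (rule finite_subset[of _ "{1..n} \<times> {1..n}"]) (auto simp: inversions_def)

lemma card_inversions_le: "card (inversions n v) \<le> n * n"
proof -
  have "inversions n v \<subseteq> {1..n} \<times> {1..n}" by (auto simp: inversions_def)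
  then have "card (inversions n v) \<le> card ({1..n} \<times> {1..n})" by (intro card_mono) auto
  then show ?thesis by (simp add: card_cartesian_product)
qed

lemma len_eq_card_inversions_inv: "len n v = card (inversions n (inv v))"
  by (simp add: len_def inversions_def)

lemma Sn_bij: "u \<in> Sn n \<Longrightarrow> bij u"
  by (simp add: Sn_def permutes_bij)

lemma Sn_in_iff: "u \<in> Sn n \<Longrightarrow> u i \<in> {1..n} \<longleftrightarrow> i \<in> {1..n}"
  unfolding Sn_def mem_Collect_eq by (rule permutes_in_image)

lemma Sn_fixpoint: "u \<in> Sn n \<Longrightarrow> i \<notin> {1..n} \<Longrightarrow> u i = i"
  by (simp add: Sn_def permutes_not_in)

lemma Sn_inv: "u \<in> Sn n \<Longrightarrow> inv u \<in> Sn n"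
  by (simp add: Sn_def permutes_inv)

lemma Sn_inv_apply [simp]: "u \<in> Sn n \<Longrightarrow> inv u (u i) = i"
  and Sn_apply_inv [simp]: "u \<in> Sn n \<Longrightarrow> u (inv u i) = i"
  by (simp_all add: Sn_def permutes_inverses)

lemma Sn_comp: "u \<in> Sn n \<Longrightarrow> v \<in> Sn n \<Longrightarrow> u \<circ> v \<in> Sn n"
  by (simp add: Sn_def permutes_compose)

lemma Sn_transpose: "j \<in> {1..n} \<Longrightarrow> k \<in> {1..n} \<Longrightarrow> transpose j k \<in> Sn n"
  by (simp add: Sn_def permutes_swap_id)

lemma Sn_inj: "u \<in> Sn n \<Longrightarrow> u x = u y \<longleftrightarrow> x = y"
  by (metis Sn_inv_apply)

lemma finite_Sn: "finite (Sn n)"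
  by (simp add: Sn_def finite_permutations)

lemma inv_transpose_comp: "u \<in> Sn n \<Longrightarrow> inv (transpose j k \<circ> u) = inv u \<circ> transpose j k"
  by (simp add: o_inv_distrib Sn_bij)

lemma inversions_inv_iff:
  assumes "u \<in> Sn n"
  shows "(a, b) \<in> inversions n u \<longleftrightarrow> (u b, u a) \<in> inversions n (inv u)"
proof -
  have "u b < u a \<Longrightarrow> a \<noteq> b" by auto
  then show ?thesis
    using assms Sn_in_iff[OF assms, of a] Sn_in_iff[OF assms, of b]
    by (auto simp: inversions_def Sn_inj)
qed

lemma card_inversions: "u \<in> Sn n \<Longrightarrow> card (inversions n u) = len n u"
proof -
  assume u: "u \<in> Sn n"
  let ?f = "\<lambda>(a, b). (u b, u a)"
  have "inversions n (inv u) = ?f ` inversions n u"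
  proof
    show "inversions n (inv u) \<subseteq> ?f ` inversions n u"
    proof
      fix p assume p: "p \<in> inversions n (inv u)"
      obtain j k where [simp]: "p = (j, k)" by fastforce
      have "(inv u k, inv u j) \<in> inversions n u"
        using p u by (simp add: inversions_inv_iff)
      then show "p \<in> ?f ` inversions n u"
        using u by (auto intro: image_eqI[of _ _ "(inv u k, inv u j)"])
    qed
  qed (auto simp: inversions_inv_iff[OF u])
  moreover have "inj_on ?f (inversions n u)"
    using u by (auto simp: inj_on_def Sn_inj)
  ultimately show ?thesis
    by (simp add: len_eq_card_inversions_inv card_image)
qed

text \<open>For \<open>P j < P k\<close> this matches the inversions of \<open>P\<close> injectively with those of
  \<open>P \<circ> transpose j k\<close> other than \<open>(j, k)\<close>.\<close>
definition transpose_pair_map :: "(nat \<Rightarrow> nat) \<Rightarrow> nat \<Rightarrow> nat \<Rightarrow> nat \<times> nat \<Rightarrow> nat \<times> nat" where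
  "transpose_pair_map P j k = (\<lambda>(x, y).
     if (x \<in> {j, k} \<and> y \<notin> {j, k} \<and> P j < P y \<and> P y < P k) \<or>
        (y \<in> {j, k} \<and> x \<notin> {j, k} \<and> P j < P x \<and> P x < P k)
     then (min (transpose j k x) (transpose j k y), max (transpose j k x) (transpose j k y))
     else (x, y))"

lemma transpose_pair_map_involution:
  "j < k \<Longrightarrow> x < y \<Longrightarrow> transpose_pair_map P j k (transpose_pair_map P j k (x, y)) = (x, y)"
  unfolding transpose_pair_map_def
  by (cases "x = j"; cases "x = k"; cases "y = j"; cases "y = k") (auto simp: min_def max_def)

lemma transpose_pair_map_inversions:
  assumes P: "P \<in> Sn n" and jk: "1 \<le> j" "j < k" "k \<le> n" and less: "P j < P k"
    and xy: "(x, y) \<in> inversions n P"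
  shows "transpose_pair_map P j k (x, y) \<in> inversions n (P \<circ> transpose j k) - {(j, k)}"
proof -
  let ?psi = "transpose_pair_map P j k"
  have Pinj: "P x = P y \<Longrightarrow> x = y" for x y using Sn_inj[OF P] by blast
  have new: "inversions n (P \<circ> transpose j k) =
      {(x, y). 1 \<le> x \<and> x < y \<and> y \<le> n \<and> P (transpose j k y) < P (transpose j k x)}"
    by (simp add: inversions_def)
  from xy have xy: "1 \<le> x" "x < y" "y \<le> n" "P y < P x" by (auto simp: inversions_def)
  show ?thesis
  proof (cases "(x \<in> {j, k} \<and> y \<notin> {j, k} \<and> P j < P y \<and> P y < P k) \<or>
      (y \<in> {j, k} \<and> x \<notin> {j, k} \<and> P j < P x \<and> P x < P k)")
    case True
    then consider "x = k" "y \<notin> {j, k}" "P y < P k" | "y = j" "x \<notin> {j, k}" "P j < P x"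
      using xy by auto
    then show ?thesis
    proof cases
      case 1
      then have "?psi (x, y) = (j, y)" using True jk xy by (simp add: transpose_pair_map_def)
      then show ?thesis using 1 xy jk by (simp add: new)
    next
      case 2
      then have "?psi (x, y) = (x, k)" using True jk xy by (simp add: transpose_pair_map_def)
      then show ?thesis using 2 xy jk by (simp add: new)
    qed
  next
    case False
    then have "?psi (x, y) = (x, y)" by (simp only: transpose_pair_map_def case_prod_conv if_False)
    moreover have "x \<noteq> j \<Longrightarrow> P x \<noteq> P j" "x \<noteq> k \<Longrightarrow> P x \<noteq> P k"
      "y \<noteq> j \<Longrightarrow> P y \<noteq> P j" "y \<noteq> k \<Longrightarrow> P y \<noteq> P k" using Pinj by blast+
    ultimately show ?thesis using False xy jk less unfolding new
      by (cases "x = j"; cases "x = k"; cases "y = j"; cases "y = k") (auto dest: Pinj)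
  qed
qed

lemma card_inversions_comp_transpose:
  assumes P: "P \<in> Sn n" and jk: "1 \<le> j" "j < k" "k \<le> n" and less: "P j < P k"
  shows "card (inversions n P) < card (inversions n (P \<circ> transpose j k))"
proof -
  let ?psi = "transpose_pair_map P j k"
  have "inj_on ?psi (inversions n P)"
    using transpose_pair_map_involution[OF jk(2)]
    by (intro inj_on_inverseI[where g = ?psi]) (auto simp: inversions_def)
  moreover have "?psi ` inversions n P \<subseteq> inversions n (P \<circ> transpose j k) - {(j, k)}"
  proof (rule image_subsetI)
    fix p assume "p \<in> inversions n P"
    then show "?psi p \<in> inversions n (P \<circ> transpose j k) - {(j, k)}"
      using transpose_pair_map_inversions[OF assms, of "fst p" "snd p"] by simp
  qed
  ultimately have "card (inversions n P) \<le> card (inversions n (P \<circ> transpose j k) - {(j, k)})"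
    by (intro card_inj_on_le) (simp_all add: finite_inversions)
  moreover have "(j, k) \<in> inversions n (P \<circ> transpose j k)"
    using jk less by (simp add: inversions_def)
  ultimately show ?thesis
    by (metis card_Diff1_less finite_inversions le_less_trans)
qed

lemma len_transpose_less:
  assumes "u \<in> Sn n" and "1 \<le> j" "j < k" "k \<le> n" and "inv u j < inv u k"
  shows "len n u < len n (transpose j k \<circ> u)"
  using card_inversions_comp_transpose[OF Sn_inv[OF assms(1)] assms(2-5)]
  by (simp add: len_eq_card_inversions_inv inv_transpose_comp[OF assms(1)])

lemma bruhat_le_Sn: "bruhat_le n u w \<Longrightarrow> u \<in> Sn n" "bruhat_le n u w \<Longrightarrow> w \<in> Sn n"
  by (auto simp: bruhat_le_def)

lemma bruhat_le_refl: "w \<in> Sn n \<Longrightarrow> bruhat_le n w w"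
  by (simp add: bruhat_le_def)

lemma bruhat_step_le_trans:
  assumes "bruhat_step n u v" and "bruhat_le n v w"
  shows "bruhat_le n u w"
proof -
  have "(bruhat_step n)\<^sup>*\<^sup>* u w"
    using assms by (simp add: bruhat_le_def converse_rtranclp_into_rtranclp)
  then show ?thesis
    using assms by (simp add: bruhat_le_def bruhat_step_def)
qed

lemma bruhat_le_transpose_inversion:
  assumes "bruhat_le n u w" and "(j, k) \<in> inversions n (inv u)"
  shows "bruhat_le n (transpose j k \<circ> u) w"
proof -
  have u: "u \<in> Sn n" using assms(1) by (rule bruhat_le_Sn)
  have jk: "1 \<le> j" "j < k" "k \<le> n" "inv u k < inv u j" using assms(2) by (auto simp: inversions_def)
  define v where "v = transpose j k \<circ> u"
  have v: "v \<in> Sn n" unfolding v_def using jk by (intro Sn_comp Sn_transpose u) auto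
  have u_v: "u = transpose j k \<circ> v" by (simp add: v_def flip: comp_assoc)
  have "inv v j < inv v k" using jk by (simp add: v_def inv_transpose_comp[OF u])
  then have "len n v < len n u"
    using len_transpose_less[OF v jk(1-3)] by (simp flip: u_v)
  then have "bruhat_step n v u"
    unfolding bruhat_step_def using v jk u_v by blast
  then show ?thesis using assms(1) v_def by (blast intro: bruhat_step_le_trans)
qed

lemma eq_longest_if_decreasing:
  assumes u: "u \<in> Sn n" and dec: "\<And>a b. 1 \<le> a \<Longrightarrow> a < b \<Longrightarrow> b \<le> n \<Longrightarrow> u b < u a"
  shows "u = longest n"
proof
  fix i
  show "u i = longest n i"
  proof (cases "i \<in> {1..n}")
    case True
    have range: "u a \<in> {1..n}" if "a \<in> {1..n}" for a using that Sn_in_iff[OF u] by blast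
    have upper: "u i \<le> n + 1 - i" if "1 \<le> i" "i \<le> n" for i
      using that
    proof (induction i rule: nat_induct_at_least)
      case base
      then show ?case using range[of 1] by simp
    next
      case (Suc i)
      then show ?case using dec[of i "Suc i"] by simp
    qed
    have lower: "1 \<le> i \<Longrightarrow> n + 1 - i \<le> u i" if "i \<le> n" for i
      using that
    proof (induction i rule: inc_induct)
      case base
      then show ?case using range[of n] by simp
    next
      case (step i)
      then show ?case using dec[of i "Suc i"] by simp
    qed
    have "u i = n + 1 - i" using True upper[of i] lower[of i] by simp
    then show ?thesis using True by (simp add: longest_def)
  qed (auto simp: longest_def Sn_fixpoint[OF u])
qed

lemma bruhat_le_longest: "u \<in> Sn n \<Longrightarrow> bruhat_le n u (longest n)"
proof (induction "n * n - len n u" arbitrary: u rule: less_induct)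
  case less
  show ?case
  proof (cases "\<forall>a b. 1 \<le> a \<longrightarrow> a < b \<longrightarrow> b \<le> n \<longrightarrow> u b < u a")
    case True
    then have "u = longest n" by (intro eq_longest_if_decreasing less.prems) blast
    then show ?thesis using bruhat_le_refl[OF less.prems] by simp
  next
    case False
    then obtain a b where "1 \<le> a" "a < b" "b \<le> n" "\<not> u b < u a" by blast
    moreover have "u a \<noteq> u b" using Sn_inj[OF less.prems] \<open>a < b\<close> by simp
    ultimately have ab: "1 \<le> a" "a < b" "b \<le> n" "u a < u b" by simp_all
    define v where "v = transpose (u a) (u b) \<circ> u"
    have jk: "1 \<le> u a" "u a < u b" "u b \<le> n"
      using ab Sn_in_iff[OF less.prems, of a] Sn_in_iff[OF less.prems, of b] by auto
    have v: "v \<in> Sn n" unfolding v_def using jk by (intro Sn_comp Sn_transpose less.prems) auto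
    have lt: "len n u < len n v"
      unfolding v_def using ab less.prems by (intro len_transpose_less jk) simp_all
    then have "n * n - len n v < n * n - len n u"
      using card_inversions_le[of n "inv v"] by (simp add: len_eq_card_inversions_inv)
    then have "bruhat_le n v (longest n)" using v by (rule less.hyps)
    moreover have "bruhat_step n u v"
      unfolding bruhat_step_def using less.prems jk lt v_def by blast
    ultimately show ?thesis by (rule bruhat_step_le_trans[rotated])
  qed
qed

lemma finite_bruhat_interval: "finite {v. bruhat_le n v w}"
  by (rule finite_subset[OF _ finite_Sn]) (auto dest: bruhat_le_Sn)

lemma less_fun_transpose_inversion:
  assumes u: "u \<in> Sn n" and "(j, k) \<in> inversions n (inv u)"
  shows "less_fun (transpose j k \<circ> u) u"
proof (rule less_funI, intro exI conjI allI impI)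
  have jk: "j < k" "inv u k < inv u j" using assms(2) by (auto simp: inversions_def)
  show "(transpose j k \<circ> u) (inv u k) < u (inv u k)" using u jk by simp
  fix i assume "i < inv u k"
  then have "u i \<noteq> j" "u i \<noteq> k" using jk u by auto
  then show "(transpose j k \<circ> u) i = u i" by simp
qed

lemma less_fun_imp_inversion:
  assumes u: "u \<in> Sn n" and v: "v \<in> Sn n" and "less_fun u v"
  obtains a b where "(a, b) \<in> inversions n v" and "u a = v b"
proof -
  obtain i where i: "u i < v i" "\<And>i'. i' < i \<Longrightarrow> u i' = v i'"
    using assms(3) unfolding less_fun_def by blast
  have "i \<in> {1..n}"
  proof (rule ccontr)
    assume "i \<notin> {1..n}"
    then have "u i = v i" using Sn_fixpoint[OF u] Sn_fixpoint[OF v] by simp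
    then show False using i(1) by simp
  qed
  then have "u i \<in> {1..n}" using Sn_in_iff[OF u] by blast
  define b where "b = inv v (u i)"
  have vb: "v b = u i" using v by (simp add: b_def)
  have "b \<in> {1..n}" unfolding b_def using Sn_in_iff[OF Sn_inv[OF v]] \<open>u i \<in> {1..n}\<close> by blast
  moreover have "b \<noteq> i" using vb i(1) by auto
  moreover have "\<not> b < i"
  proof
    assume "b < i"
    then have "u b = u i" using i(2)[of b] vb by simp
    then show False using \<open>b < i\<close> Sn_inj[OF u] by simp
  qed
  ultimately have "(i, b) \<in> inversions n v"
    using \<open>i \<in> {1..n}\<close> vb i(1) by (auto simp: inversions_def)
  then show ?thesis using vb that by simp
qed

lemma less_fun_trichotomy_Sn:
  assumes "x \<in> Sn n" and "y \<in> Sn n"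
  shows "less_fun x y \<or> x = y \<or> less_fun y x"
proof (rule less_fun_trichotomy)
  have "{k. x k \<noteq> y k} \<subseteq> {1..n}"
  proof
    fix k assume "k \<in> {k. x k \<noteq> y k}"
    then show "k \<in> {1..n}"
      using Sn_fixpoint[OF assms(1), of k] Sn_fixpoint[OF assms(2), of k] by (cases "k \<in> {1..n}") auto
  qed
  then show "finite {k. x k \<noteq> y k}" by (rule finite_subset) simp
qed

lemma less_fun_least:
  assumes "finite S" and "S \<noteq> {}" and "S \<subseteq> Sn n"
  shows "\<exists>x\<in>S. \<forall>y\<in>S. y \<noteq> x \<longrightarrow> less_fun x y"
  using assms
proof (induction S rule: finite_ne_induct)
  case (insert a F)
  then obtain m where m: "m \<in> F" "\<And>y. y \<in> F \<Longrightarrow> y \<noteq> m \<Longrightarrow> less_fun m y"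
    by blast
  have "a \<noteq> m" using m(1) insert.hyps(3) by blast
  then have "less_fun a m \<or> less_fun m a"
    using less_fun_trichotomy_Sn[of a n m] m(1) insert.prems by blast
  then show ?case
  proof
    assume "less_fun a m"
    then have "less_fun a y" if "y \<in> F" for y
      using m that less_fun_trans[of a m y] by (cases "y = m") simp_all
    then show ?case by blast
  next
    assume "less_fun m a"
    then show ?case using m by blast
  qed
qed simp

section \<open>GKM classes\<close>

definition root_cong :: "nat \<Rightarrow> nat \<Rightarrow> nat \<Rightarrow> mpoly \<Rightarrow> mpoly \<Rightarrow> bool" where
  "root_cong n j k a b \<longleftrightarrow> (\<exists>q\<in>polys n. a - b = (var j - var k) * q)"

lemma root_cong_refl: "root_cong n j k a a"
  unfolding root_cong_def by (rule bexI[of _ 0]) simp_all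

lemma root_cong_add:
  assumes "root_cong n j k a b" and "root_cong n j k c d"
  shows "root_cong n j k (a + c) (b + d)"
proof -
  from assms obtain q q' where q: "q \<in> polys n" "a - b = (var j - var k) * q"
    and q': "q' \<in> polys n" "c - d = (var j - var k) * q'" by (auto simp: root_cong_def)
  have "a + c - (b + d) = (a - b) + (c - d)" by (simp add: algebra_simps)
  also have "\<dots> = (var j - var k) * (q + q')" by (simp only: q q' distrib_left)
  finally show ?thesis using q q' unfolding root_cong_def by auto
qed

lemma root_cong_diff:
  assumes "root_cong n j k a b" and "root_cong n j k c d"
  shows "root_cong n j k (a - c) (b - d)"
proof -
  from assms obtain q q' where q: "q \<in> polys n" "a - b = (var j - var k) * q"
    and q': "q' \<in> polys n" "c - d = (var j - var k) * q'" by (auto simp: root_cong_def)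
  have "a - c - (b - d) = (a - b) - (c - d)" by (simp add: algebra_simps)
  also have "\<dots> = (var j - var k) * (q - q')" by (simp only: q q' right_diff_distrib)
  finally show ?thesis using q q' unfolding root_cong_def by auto
qed

lemma root_cong_mult:
  assumes "root_cong n j k a b" and "root_cong n j k c d" and "b \<in> polys n" and "c \<in> polys n"
  shows "root_cong n j k (a * c) (b * d)"
proof -
  from assms obtain q q' where q: "q \<in> polys n" "a - b = (var j - var k) * q"
    and q': "q' \<in> polys n" "c - d = (var j - var k) * q'" by (auto simp: root_cong_def)
  have "a * c - b * d = (a - b) * c + b * (c - d)" by (simp add: algebra_simps)
  also have "\<dots> = (var j - var k) * (q * c + b * q')" by (simp only: q q') (simp add: algebra_simps)
  finally show ?thesis using q q' assms(3,4) unfolding root_cong_def by auto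
qed

lemma root_cong_swap: "root_cong n j k a b \<longleftrightarrow> root_cong n k j a b"
proof -
  have "root_cong n k j a b" if "root_cong n j k a b" for j k
  proof -
    from that obtain q where q: "q \<in> polys n" "a - b = (var j - var k) * q"
      by (auto simp: root_cong_def)
    have "(var j - var k) * q = (var k - var j) * - q" by (simp add: algebra_simps)
    then show ?thesis using q unfolding root_cong_def by (intro bexI[of _ "- q"]) simp_all
  qed
  then show ?thesis by blast
qed

lemma root_cong_poly_act:
  assumes s: "s permutes {1..n}" and "root_cong n j k a b"
  shows "root_cong n (s j) (s k) (poly_act s a) (poly_act s b)"
proof -
  have b: "bij s" using s by (rule permutes_bij)
  from assms obtain q where "q \<in> polys n" "a - b = (var j - var k) * q" by (auto simp: root_cong_def)
  then show ?thesis unfolding root_cong_def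
    by (intro bexI[of _ "poly_act s q"])
      (simp_all add: poly_act_polys[OF s] flip: poly_act_diff[OF b] poly_act_var[OF b] poly_act_mult[OF b])
qed

definition gkm_on :: "nat \<Rightarrow> (nat \<Rightarrow> nat) \<Rightarrow> ((nat \<Rightarrow> nat) \<Rightarrow> mpoly) \<Rightarrow> bool" where
  "gkm_on n w f \<longleftrightarrow> (\<forall>u. bruhat_le n u w \<longrightarrow> f u \<in> polys n) \<and>
     (\<forall>j k u. 1 \<le> j \<and> j < k \<and> k \<le> n \<and> bruhat_le n u w \<and> bruhat_le n (transpose j k \<circ> u) w \<longrightarrow>
        root_cong n j k (f u) (f (transpose j k \<circ> u)))"

lemma gkm_onI:
  assumes "\<And>u. bruhat_le n u w \<Longrightarrow> f u \<in> polys n"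
    and "\<And>j k u. 1 \<le> j \<Longrightarrow> j < k \<Longrightarrow> k \<le> n \<Longrightarrow> bruhat_le n u w \<Longrightarrow>
      bruhat_le n (transpose j k \<circ> u) w \<Longrightarrow> root_cong n j k (f u) (f (transpose j k \<circ> u))"
  shows "gkm_on n w f"
  using assms unfolding gkm_on_def by blast

lemma gkm_on_polys: "gkm_on n w f \<Longrightarrow> bruhat_le n u w \<Longrightarrow> f u \<in> polys n"
  unfolding gkm_on_def by blast

lemma gkm_on_root_cong:
  "gkm_on n w f \<Longrightarrow> 1 \<le> j \<Longrightarrow> j < k \<Longrightarrow> k \<le> n \<Longrightarrow> bruhat_le n u w \<Longrightarrow>
    bruhat_le n (transpose j k \<circ> u) w \<Longrightarrow> root_cong n j k (f u) (f (transpose j k \<circ> u))"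
  unfolding gkm_on_def by blast

lemma gkm_on_add: "gkm_on n w f \<Longrightarrow> gkm_on n w g \<Longrightarrow> gkm_on n w (\<lambda>u. f u + g u)"
  by (intro gkm_onI) (simp_all add: gkm_on_polys root_cong_add gkm_on_root_cong)

lemma gkm_on_diff: "gkm_on n w f \<Longrightarrow> gkm_on n w g \<Longrightarrow> gkm_on n w (\<lambda>u. f u - g u)"
  by (intro gkm_onI) (simp_all add: gkm_on_polys root_cong_diff gkm_on_root_cong)

lemma gkm_on_mult: "gkm_on n w f \<Longrightarrow> gkm_on n w g \<Longrightarrow> gkm_on n w (\<lambda>u. f u * g u)"
  by (intro gkm_onI) (simp_all add: gkm_on_polys root_cong_mult gkm_on_root_cong)

lemma gkm_on_const: "c \<in> polys n \<Longrightarrow> gkm_on n w (\<lambda>_. c)"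
  by (intro gkm_onI) (simp_all add: root_cong_refl)

lemma gkm_on_sum: "(\<And>i. i \<in> I \<Longrightarrow> gkm_on n w (f i)) \<Longrightarrow> gkm_on n w (\<lambda>u. \<Sum>i\<in>I. f i u)"
  by (induction I rule: infinite_finite_induct) (simp_all add: gkm_on_const gkm_on_add)

lemma gkm_on_prod: "(\<And>i. i \<in> I \<Longrightarrow> gkm_on n w (f i)) \<Longrightarrow> gkm_on n w (\<lambda>u. \<Prod>i\<in>I. f i u)"
  by (induction I rule: infinite_finite_induct) (simp_all add: gkm_on_const gkm_on_mult)

lemma gkm_on_var_apply: "i \<in> {1..n} \<Longrightarrow> gkm_on n w (\<lambda>u. var (u i))"
proof (rule gkm_onI)
  fix u assume "i \<in> {1..n}" "bruhat_le n u w"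
  then show "var (u i) \<in> polys n"
    using Sn_in_iff[OF bruhat_le_Sn(1)] by (blast intro: polys_var)
next
  fix j k and u :: "nat \<Rightarrow> nat"
  let ?q = "if u i = j then 1 else if u i = k then - 1 else 0 :: mpoly"
  have "var (u i) - var ((transpose j k \<circ> u) i) = (var j - var k) * ?q"
    by (simp add: transpose_def)
  moreover have "?q \<in> polys n" by simp
  ultimately show "root_cong n j k (var (u i)) (var ((transpose j k \<circ> u) i))"
    unfolding root_cong_def by blast
qed

lemma gkm_on_var_diff_const:
  "i \<in> {1..n} \<Longrightarrow> c \<in> {1..n} \<Longrightarrow> gkm_on n w (\<lambda>u. var (u i) - var c)"
  by (intro gkm_on_diff gkm_on_var_apply gkm_on_const polys_var)

lemma gkm_on_mono: "gkm_on n w' f \<Longrightarrow> (\<And>u. bruhat_le n u w \<Longrightarrow> bruhat_le n u w') \<Longrightarrow> gkm_on n w f"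
  unfolding gkm_on_def by blast

lemma GKM_iff: "p \<in> GKM n w \<longleftrightarrow> gkm_on n w p \<and> (\<forall>u. \<not> bruhat_le n u w \<longrightarrow> p u = 0)"
proof
  assume "gkm_on n w p \<and> (\<forall>u. \<not> bruhat_le n u w \<longrightarrow> p u = 0)"
  moreover have "p u \<in> polys n" if "gkm_on n w p" "\<forall>u. \<not> bruhat_le n u w \<longrightarrow> p u = 0" for u
    using that gkm_on_polys[of n w p u] by (cases "bruhat_le n u w") auto
  ultimately show "p \<in> GKM n w" unfolding GKM_def gkm_on_def root_cong_def by blast
qed (auto simp: GKM_def gkm_on_def root_cong_def)

lemma GKM_gkm_on: "p \<in> GKM n w \<Longrightarrow> gkm_on n w p"
  by (simp add: GKM_iff)

lemma GKM_eq_0: "p \<in> GKM n w \<Longrightarrow> \<not> bruhat_le n u w \<Longrightarrow> p u = 0"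
  by (simp add: GKM_iff)

lemma GKM_polys: "p \<in> GKM n w \<Longrightarrow> p u \<in> polys n"
  by (simp add: GKM_def)

lemma restr_GKM: "gkm_on n w f \<Longrightarrow> restr n w f \<in> GKM n w"
  unfolding GKM_iff gkm_on_def restr_def by auto

lemma GKM_mult_gkm_on: "p \<in> GKM n w \<Longrightarrow> gkm_on n w f \<Longrightarrow> (\<lambda>u. f u * p u) \<in> GKM n w"
  by (simp add: GKM_iff gkm_on_mult)

lemma GKM_sum: "(\<And>i. i \<in> I \<Longrightarrow> f i \<in> GKM n w) \<Longrightarrow> (\<lambda>u. \<Sum>i\<in>I. f i u) \<in> GKM n w"
  by (simp add: GKM_iff gkm_on_sum)

definition t_multiple :: "nat \<Rightarrow> (nat \<Rightarrow> nat) \<Rightarrow> ((nat \<Rightarrow> nat) \<Rightarrow> mpoly) \<Rightarrow> bool" where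
  "t_multiple n w f \<longleftrightarrow> (\<exists>y. (\<forall>i. gkm_on n w (y i)) \<and> f = (\<lambda>u. \<Sum>i=1..n. var i * y i u))"

lemma t_multiple_0: "t_multiple n w (\<lambda>_. 0)"
  unfolding t_multiple_def by (intro exI[of _ "\<lambda>_ _. 0"]) (simp add: gkm_on_const)

lemma t_multiple_add:
  assumes "t_multiple n w f" and "t_multiple n w g"
  shows "t_multiple n w (\<lambda>u. f u + g u)"
proof -
  from assms obtain y z where "\<forall>i. gkm_on n w (y i)" "f = (\<lambda>u. \<Sum>i=1..n. var i * y i u)"
    "\<forall>i. gkm_on n w (z i)" "g = (\<lambda>u. \<Sum>i=1..n. var i * z i u)" by (auto simp: t_multiple_def)
  then show ?thesis unfolding t_multiple_def
    by (intro exI[of _ "\<lambda>i u. y i u + z i u"]) (simp add: gkm_on_add distrib_left sum.distrib)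
qed

lemma t_multiple_mult:
  assumes "t_multiple n w f" and "gkm_on n w g"
  shows "t_multiple n w (\<lambda>u. f u * g u)"
proof -
  from assms obtain y where "\<forall>i. gkm_on n w (y i)" "f = (\<lambda>u. \<Sum>i=1..n. var i * y i u)"
    by (auto simp: t_multiple_def)
  then show ?thesis unfolding t_multiple_def using assms(2)
    by (intro exI[of _ "\<lambda>i u. y i u * g u"]) (simp add: gkm_on_mult sum_distrib_right mult.assoc)
qed

lemma t_multiple_sum: "(\<And>i. i \<in> I \<Longrightarrow> t_multiple n w (f i)) \<Longrightarrow> t_multiple n w (\<lambda>u. \<Sum>i\<in>I. f i u)"
  by (induction I rule: infinite_finite_induct) (simp_all add: t_multiple_0 t_multiple_add)

lemma t_multiple_const_mult:
  assumes "c \<in> polys n" and "lookup c 0 = 0" and "gkm_on n w g"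
  shows "t_multiple n w (\<lambda>u. c * g u)"
proof -
  obtain h where "\<And>i. h i \<in> polys n" and "c = (\<Sum>i=1..n. var i * h i)"
    using var_ideal_decomp[OF assms(1,2)] by blast
  then show ?thesis unfolding t_multiple_def using assms(3)
    by (intro exI[of _ "\<lambda>i u. h i * g u"])
      (simp add: gkm_on_mult gkm_on_const sum_distrib_right mult.assoc)
qed

lemma t_multiple_prod_diff:
  assumes "finite I"
    and "\<And>i. i \<in> I \<Longrightarrow> gkm_on n w (A i)" and "\<And>i. i \<in> I \<Longrightarrow> gkm_on n w (B i)"
    and "\<And>i. i \<in> I \<Longrightarrow> t_multiple n w (\<lambda>u. A i u - B i u)"
  shows "t_multiple n w (\<lambda>u. (\<Prod>i\<in>I. A i u) - (\<Prod>i\<in>I. B i u))"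
  using assms
proof (induction I rule: finite_induct)
  case empty
  then show ?case by (simp add: t_multiple_0)
next
  case (insert x F)
  have "t_multiple n w (\<lambda>u. (A x u - B x u) * (\<Prod>i\<in>F. A i u) + ((\<Prod>i\<in>F. A i u) - (\<Prod>i\<in>F. B i u)) * B x u)"
    using insert by (intro t_multiple_add t_multiple_mult gkm_on_prod) simp_all
  moreover have "(A x u - B x u) * (\<Prod>i\<in>F. A i u) + ((\<Prod>i\<in>F. A i u) - (\<Prod>i\<in>F. B i u)) * B x u =
      (\<Prod>i\<in>insert x F. A i u) - (\<Prod>i\<in>insert x F. B i u)" for u
    using insert.hyps by (simp add: algebra_simps)
  ultimately show ?case by simp
qed

lemma restr_t_multiple:
  assumes "t_multiple n w f"
  shows "restr n w f \<in> tGKM n w"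
proof -
  from assms obtain y where y: "\<forall>i. gkm_on n w (y i)" and f: "f = (\<lambda>u. \<Sum>i=1..n. var i * y i u)"
    by (auto simp: t_multiple_def)
  have "\<forall>i. restr n w (y i) \<in> GKM n w" using y by (simp add: restr_GKM)
  moreover have "restr n w f = (\<lambda>u. \<Sum>i=1..n. var i * restr n w (y i) u)"
    by (simp add: restr_def fun_eq_iff f)
  ultimately show ?thesis
    unfolding tGKM_def mem_Collect_eq by (intro exI[of _ "\<lambda>i. restr n w (y i)"] conjI)
qed

section \<open>A triangular basis\<close>

text \<open>For \<open>c = v\<close> this vanishes at every \<open>u\<close> lexicographically below \<open>v\<close> but not at \<open>v\<close>;
  other \<open>c\<close> arise from the action of \<open>S\<^sub>n\<close>.\<close>
definition root_product :: "nat \<Rightarrow> (nat \<Rightarrow> nat) \<Rightarrow> (nat \<Rightarrow> nat) \<Rightarrow> (nat \<Rightarrow> nat) \<Rightarrow> mpoly" where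
  "root_product n v c u = (\<Prod>(a, b)\<in>inversions n v. var (u a) - var (c b))"

lemma inversions_in_range: "(a, b) \<in> inversions n v \<Longrightarrow> a \<in> {1..n} \<and> b \<in> {1..n}"
  by (auto simp: inversions_def)

lemma gkm_on_root_product:
  assumes "c \<in> Sn n"
  shows "gkm_on n w (root_product n v c)"
  unfolding root_product_def
proof (intro gkm_on_prod, unfold case_prod_unfold)
  fix p assume "p \<in> inversions n v"
  then show "gkm_on n w (\<lambda>u. var (u (fst p)) - var (c (snd p)))"
    using inversions_in_range[of "fst p" "snd p"] Sn_in_iff[OF assms, of "snd p"]
    by (intro gkm_on_var_diff_const) auto
qed

lemma homog_root_product: "v \<in> Sn n \<Longrightarrow> homog (len n v) (root_product n v c u)"
  using homog_prod_var_diff[OF finite_inversions, of n v "\<lambda>(a, b). u a" "\<lambda>(a, b). c b"]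
  by (simp add: root_product_def card_inversions case_prod_unfold)

definition basis_class :: "nat \<Rightarrow> (nat \<Rightarrow> nat) \<Rightarrow> (nat \<Rightarrow> nat) \<Rightarrow> (nat \<Rightarrow> nat) \<Rightarrow> mpoly" where
  "basis_class n w v = restr n w (root_product n v v)"

lemma basis_class_GKM: "v \<in> Sn n \<Longrightarrow> basis_class n w v \<in> GKM n w"
  unfolding basis_class_def by (intro restr_GKM gkm_on_root_product)

lemma basis_class_apply: "bruhat_le n u w \<Longrightarrow> basis_class n w v u = root_product n v v u"
  by (simp add: basis_class_def restr_def)

lemma homog_basis_class: "v \<in> Sn n \<Longrightarrow> homog (len n v) (basis_class n w v u)"
  by (simp add: basis_class_def restr_def homog_root_product)

lemma basis_class_eq_0_if_less_fun:
  assumes u: "bruhat_le n u w" and v: "v \<in> Sn n" and "less_fun u v"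
  shows "basis_class n w v u = 0"
proof -
  obtain a b where "(a, b) \<in> inversions n v" "u a = v b"
    using less_fun_imp_inversion[OF bruhat_le_Sn(1)[OF u] v \<open>less_fun u v\<close>] .
  then show ?thesis
    unfolding basis_class_apply[OF u] root_product_def
    by (intro prod_zero[OF finite_inversions] bexI[of _ "(a, b)"]) simp_all
qed

lemma basis_class_self_neq_0:
  assumes "bruhat_le n v w"
  shows "basis_class n w v v \<noteq> 0"
proof -
  have "var (v a) - var (v b) \<noteq> 0" if "(a, b) \<in> inversions n v" for a b
    using that by (auto simp: inversions_def var_inj)
  then show ?thesis
    by (simp add: basis_class_apply[OF assms] root_product_def finite_inversions case_prod_unfold)
qed

text \<open>The factors \<open>t\<^bsub>u(a)\<^esub> - t\<^bsub>u(b)\<^esub>\<close> of the diagonal entry are pairwise coprime, and each divides \<open>p u\<close>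
  by the GKM condition along the edge to the lexicographically smaller \<open>transpose (u b) (u a) \<circ> u\<close>.\<close>
lemma basis_class_self_dvd:
  assumes p: "p \<in> GKM n w" and u: "bruhat_le n u w"
    and below: "\<And>x. bruhat_le n x w \<Longrightarrow> less_fun x u \<Longrightarrow> p x = 0"
  shows "basis_class n w u u dvd p u"
proof -
  have uS: "u \<in> Sn n" using u by (rule bruhat_le_Sn)
  have "(\<Prod>i\<in>inversions n u. var (u (fst i)) - var (u (snd i))) dvd p u"
  proof (rule prod_var_diff_dvd[OF finite_inversions])
    fix i assume i: "i \<in> inversions n u"
    obtain a b where [simp]: "i = (a, b)" by fastforce
    have ab: "a < b" "u b < u a" using i by (auto simp: inversions_def)
    then show "u (fst i) \<noteq> u (snd i)" by simp
    have inv: "(u b, u a) \<in> inversions n (inv u)"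
      using i by (simp add: inversions_inv_iff[OF uS])
    then have jk: "1 \<le> u b" "u b < u a" "u a \<le> n" by (auto simp: inversions_def)
    have le: "bruhat_le n (transpose (u b) (u a) \<circ> u) w"
      by (rule bruhat_le_transpose_inversion[OF u inv])
    have "p (transpose (u b) (u a) \<circ> u) = 0"
      by (rule below[OF le less_fun_transpose_inversion[OF uS inv]])
    moreover have "root_cong n (u b) (u a) (p u) (p (transpose (u b) (u a) \<circ> u))"
      by (rule gkm_on_root_cong[OF GKM_gkm_on[OF p] jk u le])
    ultimately have "root_cong n (u a) (u b) (p u) 0"
      by (simp add: root_cong_swap)
    then show "(var (u (fst i)) - var (u (snd i))) dvd p u"
      by (auto simp: root_cong_def)
  next
    fix i i' assume "i \<in> inversions n u" "i' \<in> inversions n u" "i \<noteq> i'"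
    then show "{u (fst i), u (snd i)} \<noteq> {u (fst i'), u (snd i')}"
      by (auto simp: inversions_def doubleton_eq_iff Sn_inj[OF uS] prod_eq_iff)
  qed
  then show ?thesis
    by (simp add: basis_class_apply[OF u] root_product_def case_prod_unfold)
qed

definition bruhat_below :: "nat \<Rightarrow> (nat \<Rightarrow> nat) \<Rightarrow> (nat \<Rightarrow> nat) set" where
  "bruhat_below n w = {v. bruhat_le n v w}"

lemma finite_bruhat_below: "finite (bruhat_below n w)"
  by (simp add: bruhat_below_def finite_bruhat_interval)

definition is_expansion :: "nat \<Rightarrow> (nat \<Rightarrow> nat) \<Rightarrow> ((nat \<Rightarrow> nat) \<Rightarrow> mpoly) \<Rightarrow> ((nat \<Rightarrow> nat) \<Rightarrow> mpoly) \<Rightarrow> bool" where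
  "is_expansion n w p g \<longleftrightarrow> (\<forall>v. \<not> bruhat_le n v w \<longrightarrow> g v = 0) \<and>
     (\<forall>u. p u = (\<Sum>v\<in>bruhat_below n w. g v * basis_class n w v u))"

lemma exists_lex_least_support:
  assumes "bruhat_le n v w" and "p v \<noteq> 0"
  shows "\<exists>u. bruhat_le n u w \<and> p u \<noteq> 0 \<and> (\<forall>x. bruhat_le n x w \<longrightarrow> less_fun x u \<longrightarrow> p x = 0)"
proof -
  define S where "S = {v \<in> bruhat_below n w. p v \<noteq> 0}"
  have "S \<noteq> {}" using assms by (auto simp: S_def bruhat_below_def)
  moreover have "S \<subseteq> Sn n" by (auto simp: S_def bruhat_below_def dest: bruhat_le_Sn)
  moreover have "finite S" by (simp add: S_def finite_bruhat_below)
  ultimately obtain u where u: "u \<in> S" and least: "\<forall>v\<in>S. v \<noteq> u \<longrightarrow> less_fun u v"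
    using less_fun_least by blast
  have "p x = 0" if "bruhat_le n x w" "less_fun x u" for x
  proof (rule ccontr)
    assume "p x \<noteq> 0"
    then have "x \<in> S" using that(1) by (simp add: S_def bruhat_below_def)
    moreover have "x \<noteq> u" using that(2) less_fun_irrefl by blast
    ultimately show False using least that(2) less_fun_asym by blast
  qed
  then show ?thesis using u by (auto simp: S_def bruhat_below_def)
qed

lemma basis_class_independent:
  assumes h0: "\<And>v. \<not> bruhat_le n v w \<Longrightarrow> h v = 0"
    and sum0: "\<And>u. (\<Sum>v\<in>bruhat_below n w. h v * basis_class n w v u) = 0"
  shows "h v = 0"
proof (rule ccontr)
  assume "h v \<noteq> 0"
  then obtain u where u: "bruhat_le n u w" "h u \<noteq> 0"
    and below: "\<forall>x. bruhat_le n x w \<longrightarrow> less_fun x u \<longrightarrow> h x = 0"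
    using exists_lex_least_support[of n v w h] h0 by blast
  have uS: "u \<in> Sn n" using u(1) by (rule bruhat_le_Sn)
  have rest: "h v * basis_class n w v u = 0" if "v \<in> bruhat_below n w - {u}" for v
  proof (cases "h v = 0")
    case False
    have vS: "v \<in> Sn n" using that by (auto simp: bruhat_below_def dest: bruhat_le_Sn)
    then have "less_fun u v"
      using False that below less_fun_trichotomy_Sn[OF uS vS] by (auto simp: bruhat_below_def)
    then show ?thesis using basis_class_eq_0_if_less_fun[OF u(1) vS] by simp
  qed simp
  have "(\<Sum>v\<in>bruhat_below n w. h v * basis_class n w v u) =
      h u * basis_class n w u u + (\<Sum>v\<in>bruhat_below n w - {u}. h v * basis_class n w v u)"
    using u(1) by (intro sum.remove[OF finite_bruhat_below]) (simp add: bruhat_below_def)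
  also have "(\<Sum>v\<in>bruhat_below n w - {u}. h v * basis_class n w v u) = 0"
    using rest by (rule sum.neutral[OF ballI])
  finally show False using sum0 basis_class_self_neq_0[OF u(1)] u(2) by simp
qed

lemma expansion_unique:
  assumes "is_expansion n w p g" and "is_expansion n w p g'"
  shows "g = g'"
proof
  fix v
  have "\<And>v. \<not> bruhat_le n v w \<Longrightarrow> g v - g' v = 0"
    using assms by (simp add: is_expansion_def)
  moreover have "\<And>u. (\<Sum>v\<in>bruhat_below n w. (g v - g' v) * basis_class n w v u) = 0"
    using assms by (simp add: is_expansion_def left_diff_distrib sum_subtractf)
  ultimately have "g v - g' v = 0" by (rule basis_class_independent)
  then show "g v = g' v" by simp
qed

lemma GKM_peel_least:
  assumes p: "p \<in> GKM n w" and u: "bruhat_le n u w"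
    and below: "\<And>x. bruhat_le n x w \<Longrightarrow> less_fun x u \<Longrightarrow> p x = 0"
  shows "\<exists>c\<in>polys n. (\<lambda>x. p x - c * basis_class n w u x) \<in> GKM n w \<and>
    (\<forall>x. bruhat_le n x w \<longrightarrow> \<not> less_fun u x \<longrightarrow> p x - c * basis_class n w u x = 0)"
proof -
  have uS: "u \<in> Sn n" using u by (rule bruhat_le_Sn)
  obtain c where c: "c \<in> polys n" and pu: "p u = basis_class n w u u * c"
    using polys_dvd_quotient[OF basis_class_self_dvd[OF p u below] GKM_polys[OF p]
        GKM_polys[OF basis_class_GKM[OF uS]]] .
  have "(\<lambda>x. p x - c * basis_class n w u x) \<in> GKM n w"
    using p basis_class_GKM[OF uS] c
    by (simp add: GKM_iff gkm_on_diff gkm_on_mult gkm_on_const)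
  moreover have "p x - c * basis_class n w u x = 0" if "bruhat_le n x w" "\<not> less_fun u x" for x
  proof (cases "x = u")
    case False
    then have "less_fun x u"
      using that less_fun_trichotomy_Sn[OF bruhat_le_Sn(1)[OF that(1)] uS] by blast
    then show ?thesis using below[OF that(1)] basis_class_eq_0_if_less_fun[OF that(1) uS] by simp
  qed (simp add: pu)
  ultimately show ?thesis using c by blast
qed

lemma is_expansion_add_basis_class:
  assumes "is_expansion n w p g" and "bruhat_le n u w"
  shows "is_expansion n w (\<lambda>x. p x + c * basis_class n w u x) (g(u := g u + c))"
  unfolding is_expansion_def
proof (intro conjI allI impI)
  show "(g(u := g u + c)) v = 0" if "\<not> bruhat_le n v w" for v
    using assms that by (auto simp: is_expansion_def)
  have u: "u \<in> bruhat_below n w" using assms(2) by (simp add: bruhat_below_def)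
  fix x
  have "(\<Sum>v\<in>bruhat_below n w. (g(u := g u + c)) v * basis_class n w v x) =
      (\<Sum>v\<in>bruhat_below n w. g v * basis_class n w v x) + c * basis_class n w u x"
    using u by (simp add: sum.remove[OF finite_bruhat_below] algebra_simps)
  then show "p x + c * basis_class n w u x =
      (\<Sum>v\<in>bruhat_below n w. (g(u := g u + c)) v * basis_class n w v x)"
    using assms(1) by (simp add: is_expansion_def)
qed

definition lex_upper_support :: "nat \<Rightarrow> (nat \<Rightarrow> nat) \<Rightarrow> ((nat \<Rightarrow> nat) \<Rightarrow> mpoly) \<Rightarrow> (nat \<Rightarrow> nat) set" where
  "lex_upper_support n w p =
     {x \<in> bruhat_below n w. \<exists>y\<in>bruhat_below n w. p y \<noteq> 0 \<and> (y = x \<or> less_fun y x)}"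

lemma card_lex_upper_support_less:
  assumes u: "bruhat_le n u w" and "p u \<noteq> 0"
    and above: "\<And>y. y \<in> bruhat_below n w \<Longrightarrow> q y \<noteq> 0 \<Longrightarrow> less_fun u y"
  shows "card (lex_upper_support n w q) < card (lex_upper_support n w p)"
proof (rule psubset_card_mono)
  show "finite (lex_upper_support n w p)"
    by (simp add: lex_upper_support_def finite_bruhat_below)
  have "lex_upper_support n w q \<subseteq> lex_upper_support n w p"
  proof
    fix x assume "x \<in> lex_upper_support n w q"
    then obtain y where y: "x \<in> bruhat_below n w" "y \<in> bruhat_below n w" "q y \<noteq> 0" "y = x \<or> less_fun y x"
      by (auto simp: lex_upper_support_def)
    then have "less_fun u y" by (intro above)
    with y(4) have "less_fun u x" using less_fun_trans[of u y x] by auto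
    then show "x \<in> lex_upper_support n w p"
      using y(1) assms(1,2) by (auto simp: lex_upper_support_def bruhat_below_def)
  qed
  moreover have "u \<notin> lex_upper_support n w q"
  proof
    assume "u \<in> lex_upper_support n w q"
    then obtain y where "y \<in> bruhat_below n w" "q y \<noteq> 0" "y = u \<or> less_fun y u"
      by (auto simp: lex_upper_support_def)
    then show False using above[of y] less_fun_irrefl[of u] less_fun_asym[of u y] by auto
  qed
  moreover have "u \<in> lex_upper_support n w p"
    using assms(1,2) by (auto simp: lex_upper_support_def bruhat_below_def)
  ultimately show "lex_upper_support n w q \<subset> lex_upper_support n w p" by blast
qed

text \<open>Subtracting a multiple of the basis class of the lexicographically least point \<open>u\<close> of the
  support leaves a class supported strictly above \<open>u\<close>.\<close>
lemma expansion_exists: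
  assumes "p \<in> GKM n w"
  shows "\<exists>g. (\<forall>v. g v \<in> polys n) \<and> is_expansion n w p g"
  using assms
proof (induction "card (lex_upper_support n w p)" arbitrary: p rule: less_induct)
  case less
  show ?case
  proof (cases "\<forall>v. bruhat_le n v w \<longrightarrow> p v = 0")
    case True
    then have "is_expansion n w p (\<lambda>_. 0)"
      using GKM_eq_0[OF less.prems] by (auto simp: is_expansion_def)
    then show ?thesis by (intro exI[of _ "\<lambda>_. 0"]) simp
  next
    case False
    then obtain u where u: "bruhat_le n u w" "p u \<noteq> 0"
      and below: "\<forall>x. bruhat_le n x w \<longrightarrow> less_fun x u \<longrightarrow> p x = 0"
      using exists_lex_least_support by blast
    obtain c where c: "c \<in> polys n" and p': "(\<lambda>x. p x - c * basis_class n w u x) \<in> GKM n w"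
      and vanish: "\<forall>x. bruhat_le n x w \<longrightarrow> \<not> less_fun u x \<longrightarrow> p x - c * basis_class n w u x = 0"
      using GKM_peel_least[OF less.prems u(1)] below by blast
    have "card (lex_upper_support n w (\<lambda>x. p x - c * basis_class n w u x)) <
        card (lex_upper_support n w p)"
      by (rule card_lex_upper_support_less[where p = p, OF u])
        (use vanish in \<open>auto simp: bruhat_below_def\<close>)
    then obtain g' where g': "\<forall>v. g' v \<in> polys n"
      and "is_expansion n w (\<lambda>x. p x - c * basis_class n w u x) g'"
      using less.hyps p' by blast
    then have "is_expansion n w p (g'(u := g' u + c))"
      using is_expansion_add_basis_class[OF _ u(1), of "\<lambda>x. p x - c * basis_class n w u x" g' c] by simp
    then show ?thesis using g' c by (intro exI[of _ "g'(u := g' u + c)"]) simp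
  qed
qed

definition gkm_coeffs :: "nat \<Rightarrow> (nat \<Rightarrow> nat) \<Rightarrow> ((nat \<Rightarrow> nat) \<Rightarrow> mpoly) \<Rightarrow> (nat \<Rightarrow> nat) \<Rightarrow> mpoly" where
  "gkm_coeffs n w p = (THE g. is_expansion n w p g)"

lemma gkm_coeffs_eq:
  assumes "is_expansion n w p g"
  shows "gkm_coeffs n w p = g"
  unfolding gkm_coeffs_def
proof (rule the_equality)
  show "g' = g" if "is_expansion n w p g'" for g'
    using that assms by (rule expansion_unique)
qed (fact assms)

lemma
  assumes "p \<in> GKM n w"
  shows is_expansion_gkm_coeffs: "is_expansion n w p (gkm_coeffs n w p)"
    and gkm_coeffs_polys: "gkm_coeffs n w p v \<in> polys n"
proof -
  obtain g where "\<forall>v. g v \<in> polys n" and "is_expansion n w p g"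
    using expansion_exists[OF assms] by blast
  then show "is_expansion n w p (gkm_coeffs n w p)" and "gkm_coeffs n w p v \<in> polys n"
    by (simp_all add: gkm_coeffs_eq)
qed

lemma is_expansion_0: "is_expansion n w (\<lambda>_. 0) (\<lambda>_. 0)"
  by (simp add: is_expansion_def)

lemma is_expansion_add:
  "is_expansion n w p g \<Longrightarrow> is_expansion n w q h \<Longrightarrow>
    is_expansion n w (\<lambda>u. p u + q u) (\<lambda>v. g v + h v)"
  by (simp add: is_expansion_def distrib_right sum.distrib)

lemma is_expansion_const_mult:
  "is_expansion n w p g \<Longrightarrow> is_expansion n w (\<lambda>u. c * p u) (\<lambda>v. c * g v)"
  by (simp add: is_expansion_def sum_distrib_left mult.assoc)

lemma is_expansion_sum:
  "(\<And>i. i \<in> I \<Longrightarrow> is_expansion n w (p i) (g i)) \<Longrightarrow>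
    is_expansion n w (\<lambda>u. \<Sum>i\<in>I. p i u) (\<lambda>v. \<Sum>i\<in>I. g i v)"
  by (induction I rule: infinite_finite_induct) (simp_all add: is_expansion_0 is_expansion_add)

text \<open>The coefficients of a class homogeneous of degree \<open>d\<close> are homogeneous of degree \<open>d - len n v\<close>.\<close>
lemma lookup_gkm_coeffs_0_homog:
  assumes x: "x \<in> GKM n w" and hom: "\<And>u. homog d (x u)" and "len n v \<noteq> d"
  shows "lookup (gkm_coeffs n w x v) 0 = 0"
proof -
  let ?g = "gkm_coeffs n w x"
  define g' where "g' v = (if len n v \<le> d then hom_component (d - len n v) (?g v) else 0)" for v
  have ex: "is_expansion n w x ?g" by (rule is_expansion_gkm_coeffs[OF x])
  have "is_expansion n w x g'"
    unfolding is_expansion_def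
  proof (intro conjI allI impI)
    show "g' v = 0" if "\<not> bruhat_le n v w" for v
      using ex that by (simp add: is_expansion_def g'_def hom_component_def)
    fix u
    have "x u = hom_component d (x u)" by (simp add: hom_component_homog[OF hom])
    also have "\<dots> = (\<Sum>v\<in>bruhat_below n w. hom_component d (?g v * basis_class n w v u))"
      using ex by (simp add: is_expansion_def hom_component_sum)
    also have "\<dots> = (\<Sum>v\<in>bruhat_below n w. g' v * basis_class n w v u)"
      by (intro sum.cong refl)
        (auto simp: bruhat_below_def g'_def hom_component_mult_homog[OF homog_basis_class]
          dest: bruhat_le_Sn)
    finally show "x u = (\<Sum>v\<in>bruhat_below n w. g' v * basis_class n w v u)" .
  qed
  then have "?g = g'" by (rule gkm_coeffs_eq)
  moreover have "lookup (g' v) 0 = 0" using assms(3) by (simp add: g'_def lookup_hom_component mono_deg_def)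
  ultimately show ?thesis by simp
qed

lemma GKM_in_tGKM_if_const_terms_0:
  assumes x: "x \<in> GKM n w" and zero: "\<And>v. lookup (gkm_coeffs n w x v) 0 = 0"
  shows "x \<in> tGKM n w"
proof -
  let ?g = "gkm_coeffs n w x"
  have "\<exists>H. (\<forall>i. H i \<in> polys n) \<and> ?g v = (\<Sum>i=1..n. var i * H i)" for v
    using var_ideal_decomp[OF gkm_coeffs_polys[OF x] zero] by blast
  then obtain H where H: "\<And>v i. H v i \<in> polys n" and g: "\<And>v. ?g v = (\<Sum>i=1..n. var i * H v i)"
    by metis
  define y where "y i u = (\<Sum>v\<in>bruhat_below n w. H v i * basis_class n w v u)" for i u
  have "y i \<in> GKM n w" for i
    unfolding y_def using H
    by (intro GKM_sum GKM_mult_gkm_on basis_class_GKM gkm_on_const)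
      (auto simp: bruhat_below_def dest: bruhat_le_Sn)
  moreover have "x = (\<lambda>u. \<Sum>i=1..n. var i * y i u)"
  proof
    fix u
    have "x u = (\<Sum>v\<in>bruhat_below n w. (\<Sum>i=1..n. var i * H v i) * basis_class n w v u)"
      using is_expansion_gkm_coeffs[OF x] by (simp add: is_expansion_def g)
    also have "\<dots> = (\<Sum>v\<in>bruhat_below n w. \<Sum>i=1..n. var i * (H v i * basis_class n w v u))"
      by (simp add: sum_distrib_right mult.assoc)
    also have "\<dots> = (\<Sum>i=1..n. \<Sum>v\<in>bruhat_below n w. var i * (H v i * basis_class n w v u))"
      by (rule sum.swap)
    also have "\<dots> = (\<Sum>i=1..n. var i * y i u)"
      by (simp add: y_def sum_distrib_left)
    finally show "x u = (\<Sum>i=1..n. var i * y i u)" .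
  qed
  ultimately show ?thesis unfolding tGKM_def by blast
qed

section \<open>The constant-term map\<close>

definition const_coeffs ::
  "nat \<Rightarrow> (nat \<Rightarrow> nat) \<Rightarrow> nat \<Rightarrow> ((nat \<Rightarrow> nat) \<Rightarrow> mpoly) \<Rightarrow> (nat \<Rightarrow> nat) \<Rightarrow> complex" where
  "const_coeffs n w d p v = (if bruhat_le n v w \<and> len n v = d then lookup (gkm_coeffs n w p v) 0 else 0)"

lemma const_coeffs_linear:
  assumes x: "x \<in> GKM n w" and y: "y \<in> GKM n w"
  shows "const_coeffs n w d (\<lambda>u. single 0 a * x u + single 0 b * y u) =
    (\<lambda>v. a * const_coeffs n w d x v + b * const_coeffs n w d y v)"
proof -
  have "is_expansion n w (\<lambda>u. single 0 a * x u + single 0 b * y u)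
      (\<lambda>v. single 0 a * gkm_coeffs n w x v + single 0 b * gkm_coeffs n w y v)"
    using x y by (intro is_expansion_add is_expansion_const_mult is_expansion_gkm_coeffs)
  then show ?thesis
    by (auto simp: const_coeffs_def gkm_coeffs_eq lookup_add lookup_single_0_mult)
qed

lemma const_coeffs_tGKM:
  assumes "x \<in> tGKM n w"
  shows "const_coeffs n w d x = (\<lambda>_. 0)"
proof -
  obtain y where y: "\<forall>i. y i \<in> GKM n w" and x: "x = (\<lambda>u. \<Sum>i=1..n. var i * y i u)"
    using assms by (auto simp: tGKM_def)
  have "is_expansion n w x (\<lambda>v. \<Sum>i=1..n. var i * gkm_coeffs n w (y i) v)"
    unfolding x using y by (intro is_expansion_sum is_expansion_const_mult is_expansion_gkm_coeffs) simp
  then show ?thesis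
    by (auto simp: const_coeffs_def gkm_coeffs_eq lookup_sum lookup_var_mult_0)
qed

lemma const_coeffs_eq_0_imp_tGKM:
  assumes "x \<in> GKM_deg n w d" and "const_coeffs n w d x = (\<lambda>_. 0)"
  shows "x \<in> tGKM n w"
proof (rule GKM_in_tGKM_if_const_terms_0)
  show x: "x \<in> GKM n w" using assms(1) by (simp add: GKM_deg_def)
  fix v
  show "lookup (gkm_coeffs n w x v) 0 = 0"
  proof (cases "bruhat_le n v w \<and> len n v = d")
    case True
    then show ?thesis using fun_cong[OF assms(2), of v] by (simp add: const_coeffs_def)
  next
    case False
    moreover have "\<not> bruhat_le n v w \<Longrightarrow> gkm_coeffs n w x v = 0"
      using is_expansion_gkm_coeffs[OF x] by (simp add: is_expansion_def)
    ultimately show ?thesis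
      using assms(1) lookup_gkm_coeffs_0_homog[OF x, of d v] by (auto simp: GKM_deg_def)
  qed
qed

lemma const_coeffs_image:
  "const_coeffs n w d ` GKM_deg n w d = {f. \<forall>v. \<not> (bruhat_le n v w \<and> len n v = d) \<longrightarrow> f v = 0}"
proof (intro equalityI subsetI)
  fix f assume "f \<in> const_coeffs n w d ` GKM_deg n w d"
  then show "f \<in> {f. \<forall>v. \<not> (bruhat_le n v w \<and> len n v = d) \<longrightarrow> f v = 0}"
    by (auto simp: const_coeffs_def)
next
  fix f :: "(nat \<Rightarrow> nat) \<Rightarrow> complex"
  assume f: "f \<in> {f. \<forall>v. \<not> (bruhat_le n v w \<and> len n v = d) \<longrightarrow> f v = 0}"
  define c :: "(nat \<Rightarrow> nat) \<Rightarrow> mpoly" where "c v = single 0 (f v)" for v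
  define p where "p u = (\<Sum>v\<in>bruhat_below n w. c v * basis_class n w v u)" for u
  have vS: "v \<in> bruhat_below n w \<Longrightarrow> v \<in> Sn n" for v
    by (auto simp: bruhat_below_def dest: bruhat_le_Sn)
  have "p \<in> GKM n w"
    unfolding p_def c_def by (intro GKM_sum GKM_mult_gkm_on basis_class_GKM gkm_on_const vS) simp_all
  moreover have "homog d (p u)" for u
    unfolding p_def c_def
  proof (intro homog_sum)
    fix v assume v: "v \<in> bruhat_below n w"
    show "homog d (single 0 (f v) * basis_class n w v u)"
      using f homog_single_0_mult[OF homog_basis_class[OF vS[OF v]]] by (cases "len n v = d") auto
  qed
  moreover have "(\<Sum>v\<in>bruhat_below n w. (if bruhat_le n v w then c v else 0) * basis_class n w v u) =
      p u" for u
    unfolding p_def by (rule sum.cong) (simp_all add: bruhat_below_def)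
  then have "is_expansion n w p (\<lambda>v. if bruhat_le n v w then c v else 0)"
    by (simp add: is_expansion_def)
  then have "const_coeffs n w d p = f"
    using f by (auto simp: const_coeffs_def gkm_coeffs_eq c_def fun_eq_iff)
  ultimately show "f \<in> const_coeffs n w d ` GKM_deg n w d"
    by (auto simp: GKM_deg_def)
qed

section \<open>The action of \<open>S\<^sub>n\<close>\<close>

lemma bruhat_le_longest_iff: "bruhat_le n u (longest n) \<longleftrightarrow> u \<in> Sn n"
  using bruhat_le_longest bruhat_le_Sn(1) by blast

lemma inv_comp_transpose_comp:
  assumes "s \<in> Sn n"
  shows "inv s \<circ> (transpose j k \<circ> u) = transpose (inv s j) (inv s k) \<circ> (inv s \<circ> u)"
proof -
  have "bij (inv s)" using Sn_bij[OF Sn_inv[OF assms]] .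
  then show ?thesis
    using assms by (simp add: fun_eq_iff transpose_apply_commute[of "inv s"] inv_inv_eq Sn_bij)
qed

lemma GKM_flag_root_cong:
  assumes p: "p \<in> GKM_flag n" and x: "x \<in> Sn n" and jk: "j \<in> {1..n}" "k \<in> {1..n}" "j \<noteq> k"
  shows "root_cong n j k (p x) (p (transpose j k \<circ> x))"
proof -
  have gkm: "gkm_on n (longest n) p" using p by (simp add: GKM_flag_def GKM_gkm_on)
  have le: "bruhat_le n (transpose a b \<circ> x) (longest n)" if "a \<in> {1..n}" "b \<in> {1..n}" for a b
    using that x by (simp add: bruhat_le_longest_iff Sn_comp Sn_transpose)
  show ?thesis
  proof (cases "j < k")
    case True
    then show ?thesis
      using jk le[OF jk(1,2)] x by (intro gkm_on_root_cong[OF gkm]) (auto simp: bruhat_le_longest_iff)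
  next
    case False
    then have "root_cong n k j (p x) (p (transpose k j \<circ> x))"
      using jk le[OF jk(2,1)] x by (intro gkm_on_root_cong[OF gkm]) (auto simp: bruhat_le_longest_iff)
    then show ?thesis by (simp add: root_cong_swap transpose_commute)
  qed
qed

lemma flag_act_GKM_flag:
  assumes s: "s \<in> Sn n" and p: "p \<in> GKM_flag n"
  shows "flag_act n s p \<in> GKM_flag n"
proof -
  have sp: "s permutes {1..n}" using s by (simp add: Sn_def)
  have act: "flag_act n s p u = poly_act s (p (inv s \<circ> u))" if "u \<in> Sn n" for u
    using that by (simp add: flag_act_def)
  have "gkm_on n (longest n) (flag_act n s p)"
  proof (rule gkm_onI)
    show "flag_act n s p u \<in> polys n" if "bruhat_le n u (longest n)" for u
      using that p by (simp add: bruhat_le_longest_iff act poly_act_polys[OF sp] GKM_polys GKM_flag_def)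
  next
    fix j k u assume jk: "1 \<le> j" "j < k" "k \<le> n" and "bruhat_le n u (longest n)"
    then have u: "u \<in> Sn n" by (simp add: bruhat_le_longest_iff)
    let ?x = "inv s \<circ> u"
    have "inv s j \<in> {1..n}" "inv s k \<in> {1..n}" "inv s j \<noteq> inv s k"
      using jk Sn_in_iff[OF Sn_inv[OF s]] Sn_inj[OF Sn_inv[OF s]] by auto
    then have "root_cong n (inv s j) (inv s k) (p ?x) (p (transpose (inv s j) (inv s k) \<circ> ?x))"
      by (intro GKM_flag_root_cong[OF p] Sn_comp Sn_inv s u)
    from root_cong_poly_act[OF sp this]
    have "root_cong n j k (poly_act s (p ?x)) (poly_act s (p (inv s \<circ> (transpose j k \<circ> u))))"
      using s by (simp add: inv_comp_transpose_comp)
    moreover have "transpose j k \<circ> u \<in> Sn n" using jk by (intro Sn_comp Sn_transpose u) auto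
    ultimately show "root_cong n j k (flag_act n s p u) (flag_act n s p (transpose j k \<circ> u))"
      using u by (simp add: act)
  qed
  moreover have "flag_act n s p u = 0" if "\<not> bruhat_le n u (longest n)" for u
    using that by (simp add: bruhat_le_longest_iff flag_act_def)
  ultimately show ?thesis by (simp add: GKM_flag_def GKM_iff)
qed

lemma restr_GKM_flag:
  assumes "p \<in> GKM_flag n"
  shows "restr n w p \<in> GKM n w"
proof (rule restr_GKM)
  have "gkm_on n (longest n) p" using assms by (simp add: GKM_flag_def GKM_gkm_on)
  then show "gkm_on n w p"
    by (rule gkm_on_mono) (simp add: bruhat_le_longest_iff bruhat_le_Sn)
qed

lemma poly_act_root_product:
  assumes "s \<in> Sn n"
  shows "poly_act s (root_product n v c (inv s \<circ> u)) = root_product n v (s \<circ> c) u"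
  using assms Sn_bij[OF assms]
  by (simp add: root_product_def poly_act_prod poly_act_diff poly_act_var case_prod_unfold)

lemma flag_act_expansion:
  assumes s: "s \<in> Sn n" and p: "p \<in> GKM_flag n" and u: "u \<in> Sn n"
  shows "flag_act n s p u = (\<Sum>v\<in>bruhat_below n (longest n).
    poly_act s (gkm_coeffs n (longest n) p v) * root_product n v (s \<circ> v) u)"
proof -
  let ?g = "gkm_coeffs n (longest n) p"
  have x: "inv s \<circ> u \<in> Sn n" by (intro Sn_comp Sn_inv s u)
  have "p (inv s \<circ> u) = (\<Sum>v\<in>bruhat_below n (longest n). ?g v * root_product n v v (inv s \<circ> u))"
    using is_expansion_gkm_coeffs[of p n "longest n"] p x
    by (simp add: GKM_flag_def is_expansion_def basis_class_apply bruhat_le_longest_iff)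
  then show ?thesis
    using u s Sn_bij[OF s]
    by (simp add: flag_act_def poly_act_sum poly_act_mult poly_act_root_product)
qed

lemma t_multiple_root_product_diff:
  assumes "c \<in> Sn n" and "c' \<in> Sn n"
  shows "t_multiple n w (\<lambda>u. root_product n v c u - root_product n v c' u)"
  unfolding root_product_def case_prod_unfold
proof (rule t_multiple_prod_diff[OF finite_inversions])
  fix i assume "i \<in> inversions n v"
  then have ab: "fst i \<in> {1..n}" "c (snd i) \<in> {1..n}" "c' (snd i) \<in> {1..n}"
    using inversions_in_range[of "fst i" "snd i"] Sn_in_iff[OF assms(1)] Sn_in_iff[OF assms(2)] by auto
  then show "gkm_on n w (\<lambda>u. var (u (fst i)) - var (c (snd i)))"
    and "gkm_on n w (\<lambda>u. var (u (fst i)) - var (c' (snd i)))"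
    by (simp_all add: gkm_on_var_diff_const)
  have "t_multiple n w (\<lambda>u. (var (c' (snd i)) - var (c (snd i))) * 1)"
    using ab by (intro t_multiple_const_mult gkm_on_const) (simp_all add: polys_var lookup_minus lookup_var_0)
  then show "t_multiple n w (\<lambda>u. var (u (fst i)) - var (c (snd i)) - (var (u (fst i)) - var (c' (snd i))))"
    by simp
qed

lemma restr_flag_act_diff_tGKM:
  assumes s: "s \<in> Sn n" and p: "p \<in> GKM_flag n"
  shows "restr n w (\<lambda>u. flag_act n s p u - p u) \<in> tGKM n w"
proof -
  let ?g = "gkm_coeffs n (longest n) p"
  have sp: "s permutes {1..n}" using s by (simp add: Sn_def)
  have g: "?g v \<in> polys n" for v using p by (simp add: GKM_flag_def gkm_coeffs_polys)
  have vS: "v \<in> Sn n" if "v \<in> bruhat_below n (longest n)" for v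
    using that by (simp add: bruhat_below_def bruhat_le_longest_iff)
  define K where "K u = (\<Sum>v\<in>bruhat_below n (longest n).
    (poly_act s (?g v) - ?g v) * root_product n v (s \<circ> v) u +
    (root_product n v (s \<circ> v) u - root_product n v v u) * ?g v)" for u
  have "t_multiple n w K"
    unfolding K_def using Sn_bij[OF s] g vS s
    by (intro t_multiple_sum t_multiple_add t_multiple_mult t_multiple_const_mult
        gkm_on_root_product t_multiple_root_product_diff gkm_on_const Sn_comp)
      (simp_all add: poly_act_polys[OF sp] lookup_minus lookup_poly_act_0)
  moreover have "K u = flag_act n s p u - p u" if "u \<in> Sn n" for u
    using that s p flag_act_expansion[OF s p that] is_expansion_gkm_coeffs[of p n "longest n"]
    by (simp add: K_def GKM_flag_def is_expansion_def basis_class_apply bruhat_le_longest_iff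
        algebra_simps sum_subtractf sum.distrib)
  then have "restr n w K = restr n w (\<lambda>u. flag_act n s p u - p u)"
    by (auto simp: restr_def fun_eq_iff dest: bruhat_le_Sn)
  ultimately show ?thesis using restr_t_multiple by metis
qed

lemma const_coeffs_restr_flag_act:
  assumes s: "s \<in> Sn n" and p: "p \<in> GKM_flag n"
  shows "const_coeffs n w d (restr n w (flag_act n s p)) = const_coeffs n w d (restr n w p)"
proof -
  let ?\<phi> = "const_coeffs n w d"
  let ?P = "restr n w (flag_act n s p)" and ?Q = "restr n w p"
  have P: "?P \<in> GKM n w" and Q: "?Q \<in> GKM n w"
    using restr_GKM_flag flag_act_GKM_flag[OF s p] p by blast+
  have "(\<lambda>v. 1 * ?\<phi> ?P v + (- 1) * ?\<phi> ?Q v) = ?\<phi> (\<lambda>u. single 0 1 * ?P u + single 0 (- 1) * ?Q u)"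
    by (rule const_coeffs_linear[OF P Q, symmetric])
  also have "(\<lambda>u. single 0 1 * ?P u + single 0 (- 1) * ?Q u) = restr n w (\<lambda>u. flag_act n s p u - p u)"
    by (simp add: restr_def fun_eq_iff single_uminus)
  also have "?\<phi> \<dots> = (\<lambda>_. 0)"
    by (rule const_coeffs_tGKM[OF restr_flag_act_diff_tGKM[OF s p]])
  finally show ?thesis by (simp add: fun_eq_iff)
qed

theorem mainTheorem10:
  fixes n :: nat and w :: "nat \<Rightarrow> nat"
  assumes "w \<in> Sn n"
  shows "\<forall>d::nat. \<exists>\<phi> :: ((nat \<Rightarrow> nat) \<Rightarrow> mpoly) \<Rightarrow> ((nat \<Rightarrow> nat) \<Rightarrow> complex).
     (\<forall>x \<in> GKM_deg n w d. \<forall>y \<in> GKM_deg n w d. \<forall>a b :: complex.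
         \<phi> (\<lambda>u. Poly_Mapping.single 0 a * x u + Poly_Mapping.single 0 b * y u)
           = (\<lambda>v. a * \<phi> x v + b * \<phi> y v)) \<and>
     \<phi> ` GKM_deg n w d =
        {f. \<forall>v. \<not> (bruhat_le n v w \<and> len n v = d) \<longrightarrow> f v = 0} \<and>
     (\<forall>x \<in> GKM_deg n w d. \<phi> x = (\<lambda>_. 0) \<longleftrightarrow> x \<in> tGKM n w) \<and>
     (\<forall>s \<in> Sn n. \<forall>p \<in> GKM_flag n. (\<forall>u. homog d (p u)) \<longrightarrow>
         \<phi> (restr n w (flag_act n s p)) = \<phi> (restr n w p))"
  apply (intro allI)
  subgoal for d
    using const_coeffs_linear const_coeffs_image const_coeffs_tGKM const_coeffs_eq_0_imp_tGKM
      const_coeffs_restr_flag_act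
    by (intro exI[of _ "const_coeffs n w d"] conjI ballI allI impI iffI) (auto simp: GKM_deg_def)
  done

end
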